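(* Let $\psi$ be a phylogenetic network on a set of three taxa $\{A,B,C\}$, with one gene copy ($a$, $b$, $c$ respectively) sampled from each taxon. For every choice of branch lengths $\lambda$ and inheritance probabilities $\Gamma$, there is no gene tree topology $g$ on $\{a,b,c\}$ that is anomalous for $(\psi,\lambda,\Gamma)$; that is, there is no $g$ with $P_{\psi,\lambda,\Gamma}(G=g) > P_{\psi,\lambda,\Gamma}(G=t)$ for all $t\in\mathcal{W}(\psi)$. In other words, $\psi$ does not produce anomalies.
   Context: A phylogenetic network $\psi$ is a rooted directed acyclic graph with a unique root (in-degree 0, out-degree 2), in which every other node is either an internal tree node (in-degree 1, out-degree 2), a leaf (in-degree 1, out-degree 0, labeled by a taxon), or a reticulation node (in-degree 2, out-degree 1). It has branch lengths $\lambda$ (in coalescent units), and for each reticulation node $v$ with incoming edges $b_1,b_2$ it has inheritance probabilities $\gamma_{b_1},\gamma_{b_2}\ge 0$ with $\gamma_{b_1}+\gamma_{b_2}=1$; $\Gamma$ denotes all of these. Multispecies network coalescent: gene lineages are traced backward in time from the leaves; within each branch, every pair of lineages present coalesces independently at rate 1 per coalescent unit (Kingman coalescent), for the duration given by the branch length; when a lineage reaches a reticulation node $v$, it independently enters incoming edge $b$ with probability $\gamma_b$; above the root all remaining lineages coalesce (root branch of infinite length). $P_{\psi,\lambda,\Gamma}(G=g)$ denotes the resulting probability that the gene tree topology is $g$ (with gene copies identified with their taxa). MUL-tree of $\psi$: processing nodes from the leaves toward the root, for each reticulation node $h$ with parents $u,v$ and child $w$, make two copies of the subtree rooted at $w$,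 attach one as a child of $u$ and the other as a child of $v$, and delete $h$ and its incident edges. The result is a tree whose leaves may share taxon labels. Parental trees: $\mathcal{W}(\psi)$ is the set of tree topologies on $\{A,B,C\}$ obtained from the MUL-tree by retaining exactly one leaf labeled by each taxon, deleting the others, and repeatedly suppressing nodes of in-degree 1 and out-degree 1. A gene tree topology $g$ is anomalous for $(\psi,\lambda,\Gamma)$ if $P_{\psi,\lambda,\Gamma}(G=g)>P_{\psi,\lambda,\Gamma}(G=t)$ for all $t\in\mathcal{W}(\psi)$; $\psi$ produces anomalies if some $\lambda,\Gamma$ admit an anomalous gene tree. *)

theory Defs
  imports "HOL-Analysis.Analysis" "HOL-Library.FuncSet" "HOL-Library.Sublist"
begin

text \<open>The three taxa A, B, C.  Gene copies a, b, c are identified with their taxa.\<close>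
datatype taxon = A | B | C

lemma UNIV_taxon: "(UNIV :: taxon set) = {A, B, C}"
  using taxon.exhaust by auto

instance taxon :: finite
  by standard (simp add: UNIV_taxon)

text \<open>A rooted binary tree topology on {A,B,C} is determined by its unique non-trivial
  cluster (its cherry), a 2-element subset of the taxa.  We represent a topology by
  this cluster.\<close>
definition topologies3 :: "taxon set set" where
  "topologies3 = {T. card T = 2}"

text \<open>A network is given by a node set V, an edge set Es (edges are abstract so that parallel
  edges are allowed), source/target maps, a root \<rho> and a leaf labelling lab.\<close>

definition indeg :: "'e set \<Rightarrow> ('e \<Rightarrow> 'v) \<Rightarrow> 'v \<Rightarrow> nat" where
  "indeg Es tgt v = card {e \<in> Es. tgt e = v}"

definition outdeg :: "'e set \<Rightarrow> ('e \<Rightarrow> 'v) \<Rightarrow> 'v \<Rightarrow> nat" where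
  "outdeg Es src v = card {e \<in> Es. src e = v}"

definition leaves :: "'v set \<Rightarrow> 'e set \<Rightarrow> ('e \<Rightarrow> 'v) \<Rightarrow> 'v \<Rightarrow> 'v set" where
  "leaves V Es src \<rho> = {v \<in> V. v \<noteq> \<rho> \<and> outdeg Es src v = 0}"

definition reticulations :: "'v set \<Rightarrow> 'e set \<Rightarrow> ('e \<Rightarrow> 'v) \<Rightarrow> 'v set" where
  "reticulations V Es tgt = {v \<in> V. indeg Es tgt v = 2}"

definition phylo_net3 ::
  "'v set \<Rightarrow> 'e set \<Rightarrow> ('e \<Rightarrow> 'v) \<Rightarrow> ('e \<Rightarrow> 'v) \<Rightarrow> 'v \<Rightarrow> ('v \<Rightarrow> taxon) \<Rightarrow> bool" where
  "phylo_net3 V Es src tgt \<rho> lab \<longleftrightarrow>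
     finite V \<and> finite Es \<and>
     (\<forall>e\<in>Es. src e \<in> V \<and> tgt e \<in> V) \<and>
     \<rho> \<in> V \<and> indeg Es tgt \<rho> = 0 \<and> outdeg Es src \<rho> = 2 \<and>
     (\<forall>v\<in>V - {\<rho>}.
        (indeg Es tgt v = 1 \<and> outdeg Es src v = 2) \<or>
        (indeg Es tgt v = 1 \<and> outdeg Es src v = 0) \<or>
        (indeg Es tgt v = 2 \<and> outdeg Es src v = 1)) \<and>
     acyclic {(src e, tgt e) | e. e \<in> Es} \<and>
     bij_betw lab (leaves V Es src \<rho>) (UNIV :: taxon set)"

definition valid_params ::
  "'v set \<Rightarrow> 'e set \<Rightarrow> ('e \<Rightarrow> 'v) \<Rightarrow> ('e \<Rightarrow> real) \<Rightarrow> ('e \<Rightarrow> real) \<Rightarrow> bool" where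
  "valid_params V Es tgt len \<gamma> \<longleftrightarrow>
     (\<forall>e\<in>Es. len e > 0) \<and>
     (\<forall>v\<in>reticulations V Es tgt.
        (\<forall>e\<in>Es. tgt e = v \<longrightarrow> \<gamma> e \<ge> 0) \<and> (\<Sum>e\<in>{e\<in>Es. tgt e = v}. \<gamma> e) = 1)"

text \<open>Lineages are identified with the (pairwise disjoint, nonempty) sets of taxa they carry.
  pd n k t: probability that exactly k coalescences happen in time t starting from n
  lineages, where every pair coalesces at rate 1 (total rate n choose 2); defined by
  first-step analysis of the pure-death process.\<close>
fun pd :: "nat \<Rightarrow> nat \<Rightarrow> real \<Rightarrow> real" where
  "pd n 0 t = exp (- real (n choose 2) * t)"
| "pd n (Suc k) t =
     integral {0..t} (\<lambda>s. real (n choose 2) * exp (- real (n choose 2) * s) * pd (n - 1) k (t - s))"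

definition mpairs :: "taxon set set \<Rightarrow> taxon set set set" where
  "mpairs P = {pr. pr \<subseteq> P \<and> card pr = 2}"

text \<open>mchain k P Q H: probability that k successive coalescences, each merging a uniformly
  chosen pair of the current lineages, lead from lineage set P to lineage set Q while
  creating exactly the set H of new clusters (gene tree clades).\<close>
fun mchain :: "nat \<Rightarrow> taxon set set \<Rightarrow> taxon set set \<Rightarrow> taxon set set \<Rightarrow> real" where
  "mchain 0 P Q H = (if Q = P \<and> H = {} then 1 else 0)"
| "mchain (Suc k) P Q H =
     (\<Sum>pr\<in>mpairs P.
        (if \<Union>pr \<in> H then mchain k ((P - pr) \<union> {\<Union>pr}) Q (H - {\<Union>pr}) / real (card (mpairs P))
         else 0))"

definition coalw :: "real \<Rightarrow> taxon set set \<Rightarrow> taxon set set \<Rightarrow> taxon set set \<Rightarrow> real" where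
  "coalw t P Q H = (\<Sum>k\<le>card P. pd (card P) k t * mchain k P Q H)"

text \<open>Root branch of infinite length: all lineages coalesce.\<close>
definition rootw :: "taxon set set \<Rightarrow> taxon set set \<Rightarrow> taxon set set \<Rightarrow> real" where
  "rootw P Q H = mchain (card P - 1) P Q H"

text \<open>A history assigns to each edge e a triple (lineages entering e at its bottom,
  lineages leaving e at its top, clusters created inside e).  The probability of a history
  is the product of the branch transition probabilities, the reticulation routing
  probabilities (each lineage independently chooses an incoming edge b with prob. gamma b),
  and the root-branch probability; it is zero unless the history is consistent.\<close>

definition bottom_lineages ::
  "'e set \<Rightarrow> ('e \<Rightarrow> 'v) \<Rightarrow> ('v \<Rightarrow> taxon) \<Rightarrow> ('e \<Rightarrow> taxon set set \<times> taxon set set \<times> taxon set set)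
    \<Rightarrow> 'v \<Rightarrow> taxon set set" where
  "bottom_lineages Es src lab h v =
     (if outdeg Es src v = 0 then {{lab v}}
      else \<Union>{fst (snd (h e)) | e. e \<in> Es \<and> src e = v})"

definition consistent_history ::
  "'v set \<Rightarrow> 'e set \<Rightarrow> ('e \<Rightarrow> 'v) \<Rightarrow> ('e \<Rightarrow> 'v) \<Rightarrow> 'v \<Rightarrow> ('v \<Rightarrow> taxon)
    \<Rightarrow> ('e \<Rightarrow> taxon set set \<times> taxon set set \<times> taxon set set) \<Rightarrow> bool" where
  "consistent_history V Es src tgt \<rho> lab h \<longleftrightarrow>
     (\<forall>v\<in>V - {\<rho>}.
        bottom_lineages Es src lab h v = \<Union>{fst (h e) | e. e \<in> Es \<and> tgt e = v} \<and>
        (\<forall>e1\<in>Es. \<forall>e2\<in>Es. tgt e1 = v \<and> tgt e2 = v \<and> e1 \<noteq> e2 \<longrightarrow> fst (h e1) \<inter> fst (h e2) = {}))"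

definition history_weight ::
  "'v set \<Rightarrow> 'e set \<Rightarrow> ('e \<Rightarrow> 'v) \<Rightarrow> ('e \<Rightarrow> 'v) \<Rightarrow> 'v \<Rightarrow> ('e \<Rightarrow> real) \<Rightarrow> ('e \<Rightarrow> real)
    \<Rightarrow> ('e \<Rightarrow> taxon set set \<times> taxon set set \<times> taxon set set) \<Rightarrow> taxon set set \<Rightarrow> taxon set set \<Rightarrow> real" where
  "history_weight V Es src tgt \<rho> len \<gamma> h Qr Hr =
     (\<Prod>e\<in>Es. coalw (len e) (fst (h e)) (fst (snd (h e))) (snd (snd (h e)))) *
     (\<Prod>v\<in>reticulations V Es tgt. \<Prod>e\<in>{e\<in>Es. tgt e = v}. \<gamma> e ^ card (fst (h e))) *
     rootw (\<Union>{fst (snd (h e)) | e. e \<in> Es \<and> src e = \<rho>}) Qr Hr"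

text \<open>P(G = g), g given by its cherry: the probability that the cluster g is created.\<close>
definition gene_tree_prob ::
  "'v set \<Rightarrow> 'e set \<Rightarrow> ('e \<Rightarrow> 'v) \<Rightarrow> ('e \<Rightarrow> 'v) \<Rightarrow> 'v \<Rightarrow> ('v \<Rightarrow> taxon) \<Rightarrow> ('e \<Rightarrow> real) \<Rightarrow> ('e \<Rightarrow> real)
    \<Rightarrow> taxon set \<Rightarrow> real" where
  "gene_tree_prob V Es src tgt \<rho> lab len \<gamma> g =
     (\<Sum>h\<in>Es \<rightarrow>\<^sub>E UNIV. \<Sum>(Qr, Hr)\<in>UNIV.
        if consistent_history V Es src tgt \<rho> lab h \<and> g \<in> Hr \<union> \<Union>((\<lambda>e. snd (snd (h e))) ` Es)
        then history_weight V Es src tgt \<rho> len \<gamma> h Qr Hr else 0)"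

text \<open>The MUL-tree is the unfolding of the network: its nodes are the directed paths
  (edge lists) from the root, a path q' being a descendant of q iff q is a prefix of q';
  its leaves are paths ending in a network leaf, labelled by that leaf's taxon.\<close>
fun is_path :: "'e set \<Rightarrow> ('e \<Rightarrow> 'v) \<Rightarrow> ('e \<Rightarrow> 'v) \<Rightarrow> 'e list \<Rightarrow> 'v \<Rightarrow> 'v \<Rightarrow> bool" where
  "is_path Es src tgt [] u w = (u = w)"
| "is_path Es src tgt (e # es) u w = (e \<in> Es \<and> src e = u \<and> is_path Es src tgt es (tgt e) w)"

definition mul_tree_nodes :: "'v set \<Rightarrow> 'e set \<Rightarrow> ('e \<Rightarrow> 'v) \<Rightarrow> ('e \<Rightarrow> 'v) \<Rightarrow> 'v \<Rightarrow> 'e list set" where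
  "mul_tree_nodes V Es src tgt \<rho> = {q. \<exists>w\<in>V. is_path Es src tgt q \<rho> w}"

definition mul_tree_leaf_copy ::
  "'v set \<Rightarrow> 'e set \<Rightarrow> ('e \<Rightarrow> 'v) \<Rightarrow> ('e \<Rightarrow> 'v) \<Rightarrow> 'v \<Rightarrow> ('v \<Rightarrow> taxon) \<Rightarrow> taxon \<Rightarrow> 'e list \<Rightarrow> bool" where
  "mul_tree_leaf_copy V Es src tgt \<rho> lab X q \<longleftrightarrow>
     (\<exists>v\<in>leaves V Es src \<rho>. lab v = X \<and> is_path Es src tgt q \<rho> v)"

text \<open>Parental trees: retain one leaf copy p X for each taxon X; the resulting topology
  (after suppressing unary nodes) has as clusters the sets {X. q is an ancestor of p X}
  for MUL-tree nodes q; we record its 2-element cluster.\<close>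
definition parental_trees ::
  "'v set \<Rightarrow> 'e set \<Rightarrow> ('e \<Rightarrow> 'v) \<Rightarrow> ('e \<Rightarrow> 'v) \<Rightarrow> 'v \<Rightarrow> ('v \<Rightarrow> taxon) \<Rightarrow> taxon set set" where
  "parental_trees V Es src tgt \<rho> lab =
     {T. card T = 2 \<and>
        (\<exists>p. (\<forall>X. mul_tree_leaf_copy V Es src tgt \<rho> lab X (p X)) \<and>
             (\<exists>q\<in>mul_tree_nodes V Es src tgt \<rho>. T = {X. prefix q (p X)}))}"

definition anomalous ::
  "'v set \<Rightarrow> 'e set \<Rightarrow> ('e \<Rightarrow> 'v) \<Rightarrow> ('e \<Rightarrow> 'v) \<Rightarrow> 'v \<Rightarrow> ('v \<Rightarrow> taxon) \<Rightarrow> ('e \<Rightarrow> real) \<Rightarrow> ('e \<Rightarrow> real)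
    \<Rightarrow> taxon set \<Rightarrow> bool" where
  "anomalous V Es src tgt \<rho> lab len \<gamma> g \<longleftrightarrow>
     (\<forall>t\<in>parental_trees V Es src tgt \<rho> lab.
        gene_tree_prob V Es src tgt \<rho> lab len \<gamma> g > gene_tree_prob V Es src tgt \<rho> lab len \<gamma> t)"

definition produces_anomalies ::
  "'v set \<Rightarrow> 'e set \<Rightarrow> ('e \<Rightarrow> 'v) \<Rightarrow> ('e \<Rightarrow> 'v) \<Rightarrow> 'v \<Rightarrow> ('v \<Rightarrow> taxon) \<Rightarrow> bool" where
  "produces_anomalies V Es src tgt \<rho> lab \<longleftrightarrow>
     (\<exists>len \<gamma>. valid_params V Es tgt len \<gamma> \<and>
        (\<exists>g\<in>topologies3. anomalous V Es src tgt \<rho> lab len \<gamma> g))"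

end

theory Submission
  imports Defs
begin

text \<open>
  A tree topology on three taxa is determined by its cherry, and some cherry is a parental tree:
  below the longest common prefix of three root-to-leaf paths of the MUL-tree, two of the paths
  continue along the same edge. So it suffices to show P(G = {X, Y}) \<le> P(G = {X, Z}) whenever
  {X, Y} is not a parental tree.

  The lineages at each node of a coalescent history are disjoint, so the cherry {X, Y} is created
  by merging the singleton lineages {X} and {Y}. If this happens on an edge e, then the singleton
  {Z} enters e as well, since otherwise routing the copies of X and Y through e would display
  {X, Y} in the MUL-tree; if it happens in the root branch, exactly these three singletons reach
  the root. Exchanging Y and Z everywhere above e (or only in the root branch) preserves every
  transition probability and turns the history into one creating {X, Z}. The resulting map is
  injective, because only one edge can receive the singleton {X} and then create {X, Z}.
\<close>

section \<open>Merging lineages\<close>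

definition lineage_set :: "taxon set set \<Rightarrow> bool" where
  "lineage_set P \<longleftrightarrow> (\<forall>b\<in>P. b \<noteq> {}) \<and> (\<forall>b1\<in>P. \<forall>b2\<in>P. b1 \<noteq> b2 \<longrightarrow> b1 \<inter> b2 = {})"

lemma lineage_set_subset: "lineage_set P \<Longrightarrow> P' \<subseteq> P \<Longrightarrow> lineage_set P'"
  unfolding lineage_set_def by (meson subsetD)

lemma lineage_set_unique_block:
  "lineage_set P \<Longrightarrow> b1 \<in> P \<Longrightarrow> b2 \<in> P \<Longrightarrow> W \<in> b1 \<Longrightarrow> W \<in> b2 \<Longrightarrow> b1 = b2"
  unfolding lineage_set_def by blast

inductive merges :: "taxon set set \<Rightarrow> taxon set set \<Rightarrow> taxon set set \<Rightarrow> bool" where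
  merges_refl: "merges P P {}"
| merges_step: "pr \<in> mpairs P \<Longrightarrow> merges ((P - pr) \<union> {\<Union>pr}) Q H \<Longrightarrow> merges P Q (insert (\<Union>pr) H)"

lemma mpairsE:
  assumes "pr \<in> mpairs P"
  obtains b1 b2 where "pr = {b1, b2}" "b1 \<noteq> b2" "b1 \<in> P" "b2 \<in> P"
proof -
  have "card pr = 2" "pr \<subseteq> P" using assms by (simp_all add: mpairs_def)
  then show ?thesis using that by (metis card_2_iff insert_subset)
qed

lemma mchain_nonzero_merges: "mchain k P Q H \<noteq> 0 \<Longrightarrow> merges P Q H"
proof (induction k arbitrary: P H)
  case 0
  then show ?case by (simp add: merges_refl split: if_splits)
next
  case (Suc k)
  then obtain pr where pr: "pr \<in> mpairs P" "\<Union>pr \<in> H"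
    and "mchain k ((P - pr) \<union> {\<Union>pr}) Q (H - {\<Union>pr}) \<noteq> 0"
    by (auto elim: sum.not_neutral_contains_not_neutral split: if_splits)
  then have "merges ((P - pr) \<union> {\<Union>pr}) Q (H - {\<Union>pr})" using Suc.IH by blast
  from merges_step[OF pr(1) this] show ?case using pr(2) by (simp add: insert_absorb)
qed

lemma merges_Union: "merges P Q H \<Longrightarrow> \<Union>Q = \<Union>P"
proof (induction rule: merges.induct)
  case (merges_step pr P Q H)
  have "pr \<subseteq> P" using merges_step.hyps(1) by (simp add: mpairs_def)
  then have "\<Union>((P - pr) \<union> {\<Union>pr}) = \<Union>P" by blast
  with merges_step.IH show ?case by simp
qed simp

lemma merges_refines: "merges P Q H \<Longrightarrow> b \<in> P \<Longrightarrow> \<exists>B\<in>Q. b \<subseteq> B"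
proof (induction arbitrary: b rule: merges.induct)
  case (merges_refl P)
  then show ?case by blast
next
  case (merges_step pr P Q H)
  show ?case
  proof (cases "b \<in> pr")
    case True
    have "\<Union>pr \<in> (P - pr) \<union> {\<Union>pr}" by simp
    from merges_step.IH[OF this] obtain B where "B \<in> Q" "\<Union>pr \<subseteq> B" ..
    moreover have "b \<subseteq> \<Union>pr" using True by (rule Union_upper)
    ultimately show ?thesis by (meson order_trans)
  next
    case False
    then have "b \<in> (P - pr) \<union> {\<Union>pr}" using merges_step.prems by blast
    then show ?thesis by (rule merges_step.IH)
  qed
qed

lemma merges_created_subset: "merges P Q H \<Longrightarrow> S \<in> H \<Longrightarrow> \<exists>B\<in>Q. S \<subseteq> B"
proof (induction rule: merges.induct)
  case (merges_step pr P Q H)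
  show ?case
  proof (cases "S = \<Union>pr")
    case True
    have "\<Union>pr \<in> (P - pr) \<union> {\<Union>pr}" by simp
    from merges_refines[OF merges_step.hyps(2) this] show ?thesis using True by simp
  next
    case False
    then have "S \<in> H" using merges_step.prems by simp
    then show ?thesis by (rule merges_step.IH)
  qed
qed simp

lemma lineage_set_merge:
  assumes P: "lineage_set P" and pr: "pr \<in> mpairs P"
  shows "lineage_set ((P - pr) \<union> {\<Union>pr})"
proof -
  obtain b1 b2 where b: "pr = {b1, b2}" "b1 \<in> P" "b2 \<in> P"
    using pr by (rule mpairsE)
  have disj: "c \<inter> \<Union>pr = {}" if "c \<in> P - pr" for c
    using P b that unfolding lineage_set_def by auto
  show ?thesis
    unfolding lineage_set_def
  proof (intro conjI ballI impI)
    fix c assume "c \<in> (P - pr) \<union> {\<Union>pr}"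
    then show "c \<noteq> {}" using P b unfolding lineage_set_def by auto
  next
    fix c1 c2 assume "c1 \<in> (P - pr) \<union> {\<Union>pr}" "c2 \<in> (P - pr) \<union> {\<Union>pr}" "c1 \<noteq> c2"
    then consider "c1 \<in> P - pr" "c2 \<in> P - pr" | "c1 \<in> P - pr" "c2 = \<Union>pr" | "c1 = \<Union>pr" "c2 \<in> P - pr"
      by blast
    then show "c1 \<inter> c2 = {}"
      by cases (use P \<open>c1 \<noteq> c2\<close> disj in \<open>auto simp: lineage_set_def\<close>)
  qed
qed

lemma merges_lineage_set: "merges P Q H \<Longrightarrow> lineage_set P \<Longrightarrow> lineage_set Q"
proof (induction rule: merges.induct)
  case (merges_step pr P Q H)
  then show ?case using lineage_set_merge by blast
qed

lemma subset_pair_eq_singleton: "s \<subseteq> {X, Y} \<Longrightarrow> X \<notin> s \<Longrightarrow> s \<noteq> {} \<Longrightarrow> s = {Y}"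
  by auto

lemma disjoint_cover_of_pair:
  assumes "b1 \<union> b2 = {X, Y}" "b1 \<noteq> {}" "b2 \<noteq> {}" "b1 \<inter> b2 = {}"
  shows "{b1, b2} = {{X}, {Y}}"
proof (cases "X \<in> b1")
  case True
  then have "X \<notin> b2" using assms(4) by blast
  then have b2: "b2 = {Y}" using assms(1,3) by (intro subset_pair_eq_singleton) blast+
  then have "Y \<notin> b1" using assms(4) by blast
  then have "b1 = {X}" using assms(1,2) by (intro subset_pair_eq_singleton[of _ Y X]) blast+
  then show ?thesis using b2 by simp
next
  case False
  then have b1: "b1 = {Y}" using assms(1,2) by (intro subset_pair_eq_singleton) blast+
  then have "Y \<notin> b2" using assms(4) by blast
  then have "b2 = {X}" using assms(1,3) by (intro subset_pair_eq_singleton[of _ Y X]) blast+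
  then show ?thesis using b1 by blast
qed

lemma union_of_distinct_nonempty_not_singleton:
  assumes "b1 \<noteq> b2" "b1 \<noteq> {}" "b2 \<noteq> {}"
  shows "b1 \<union> b2 \<noteq> {X}"
proof
  assume "b1 \<union> b2 = {X}"
  then have "b1 \<subseteq> {X}" "b2 \<subseteq> {X}" by blast+
  then have "b1 = {X}" "b2 = {X}" using assms(2,3) by (simp_all add: subset_singleton_iff)
  then show False using assms(1) by simp
qed

lemma merges_cherry_singletons:
  "merges P Q H \<Longrightarrow> lineage_set P \<Longrightarrow> {X, Y} \<in> H \<Longrightarrow> X \<noteq> Y \<Longrightarrow> {X} \<in> P \<and> {Y} \<in> P"
proof (induction rule: merges.induct)
  case (merges_step pr P Q H)
  obtain b1 b2 where b: "pr = {b1, b2}" "b1 \<noteq> b2" "b1 \<in> P" "b2 \<in> P"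
    using merges_step.hyps(1) by (rule mpairsE)
  have ne: "b1 \<noteq> {}" "b2 \<noteq> {}" and dj: "b1 \<inter> b2 = {}"
    using merges_step.prems(1) b(2-4) unfolding lineage_set_def by auto
  have Un: "\<Union>pr = b1 \<union> b2" using b(1) by simp
  show ?case
  proof (cases "{X, Y} = \<Union>pr")
    case True
    then have "{b1, b2} = {{X}, {Y}}"
      using Un ne dj by (intro disjoint_cover_of_pair) simp_all
    moreover have "{b1, b2} \<subseteq> P" using b(3,4) by simp
    ultimately show ?thesis by simp
  next
    case False
    then have "{X, Y} \<in> H" using merges_step.prems(2) by simp
    moreover have "lineage_set ((P - pr) \<union> {\<Union>pr})"
      using merges_step.prems(1) merges_step.hyps(1) by (rule lineage_set_merge)
    ultimately have "{X} \<in> (P - pr) \<union> {\<Union>pr} \<and> {Y} \<in> (P - pr) \<union> {\<Union>pr}"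
      using merges_step.IH merges_step.prems(3) by simp
    moreover have "\<Union>pr \<noteq> {X}" "\<Union>pr \<noteq> {Y}"
      unfolding Un using b(2) ne by (rule union_of_distinct_nonempty_not_singleton)+
    ultimately show ?thesis by auto
  qed
qed simp

lemma pd_nonneg: "pd n k t \<ge> 0"
proof (induction k arbitrary: n t)
  case (Suc k)
  show ?case
  proof (cases "(\<lambda>s. real (n choose 2) * exp (- real (n choose 2) * s) * pd (n - 1) k (t - s)) integrable_on {0..t}")
    case True
    then show ?thesis by (simp, intro integral_nonneg) (auto intro!: mult_nonneg_nonneg Suc.IH)
  next
    case False
    then show ?thesis by (simp add: not_integrable_integral)
  qed
qed simp

lemma mchain_nonneg: "mchain k P Q H \<ge> 0"
  by (induction k arbitrary: P H) (auto intro!: sum_nonneg divide_nonneg_nonneg)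

lemma coalw_nonneg: "coalw t P Q H \<ge> 0"
  unfolding coalw_def by (auto intro!: sum_nonneg mult_nonneg_nonneg pd_nonneg mchain_nonneg)

lemma rootw_nonneg: "rootw P Q H \<ge> 0"
  unfolding rootw_def by (rule mchain_nonneg)

section \<open>Relabelling taxa\<close>

definition relabel :: "(taxon \<Rightarrow> taxon) \<Rightarrow> taxon set set \<Rightarrow> taxon set set" where
  "relabel \<sigma> P = image \<sigma> ` P"

lemma inj_image_of_bij: "bij \<sigma> \<Longrightarrow> inj (image \<sigma>)"
  by (meson bij_def injI inj_image_eq_iff)

lemma inj_relabel: "bij \<sigma> \<Longrightarrow> inj (relabel \<sigma>)"
  unfolding relabel_def by (meson inj_image_of_bij injI inj_image_eq_iff)

lemma relabel_eq_iff: "bij \<sigma> \<Longrightarrow> relabel \<sigma> P = relabel \<sigma> P' \<longleftrightarrow> P = P'"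
  using inj_relabel by (metis injD)

lemma card_relabel: "bij \<sigma> \<Longrightarrow> card (relabel \<sigma> P) = card P"
  unfolding relabel_def by (meson card_image inj_image_of_bij inj_on_subset subset_UNIV)

lemma image_mem_relabel_iff: "bij \<sigma> \<Longrightarrow> \<sigma> ` S \<in> relabel \<sigma> P \<longleftrightarrow> S \<in> P"
  unfolding relabel_def using inj_image_of_bij by (metis inj_image_mem_iff)

lemma Union_relabel: "\<Union>(relabel \<sigma> P) = \<sigma> ` \<Union>P"
  unfolding relabel_def by auto

lemma relabel_Diff: "bij \<sigma> \<Longrightarrow> relabel \<sigma> (P - P') = relabel \<sigma> P - relabel \<sigma> P'"
  unfolding relabel_def by (metis image_set_diff inj_image_of_bij)

lemma relabel_Int: "bij \<sigma> \<Longrightarrow> relabel \<sigma> (P \<inter> P') = relabel \<sigma> P \<inter> relabel \<sigma> P'"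
  unfolding relabel_def by (metis image_Int inj_image_of_bij)

lemma relabel_Un: "relabel \<sigma> (P \<union> P') = relabel \<sigma> P \<union> relabel \<sigma> P'"
  unfolding relabel_def by auto

lemma relabel_insert: "relabel \<sigma> (insert S P) = insert (\<sigma> ` S) (relabel \<sigma> P)"
  unfolding relabel_def by auto

lemma relabel_empty_iff: "relabel \<sigma> P = {} \<longleftrightarrow> P = {}"
  unfolding relabel_def by auto

lemma relabel_empty: "relabel \<sigma> {} = {}"
  by (simp add: relabel_empty_iff)

lemma relabel_mono: "P \<subseteq> P' \<Longrightarrow> relabel \<sigma> P \<subseteq> relabel \<sigma> P'"
  unfolding relabel_def by auto

lemma relabel_Union: "relabel \<sigma> (\<Union>F) = \<Union>(relabel \<sigma> ` F)"
  unfolding relabel_def by blast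

lemma mpairs_relabel: "bij \<sigma> \<Longrightarrow> mpairs (relabel \<sigma> P) = relabel \<sigma> ` mpairs P"
proof
  assume b: "bij \<sigma>"
  show "mpairs (relabel \<sigma> P) \<subseteq> relabel \<sigma> ` mpairs P"
  proof
    fix pr' assume "pr' \<in> mpairs (relabel \<sigma> P)"
    then have "pr' \<subseteq> image \<sigma> ` P" "card pr' = 2" unfolding mpairs_def relabel_def by auto
    then obtain pr where pr: "pr \<subseteq> P" "pr' = image \<sigma> ` pr" by (auto simp: subset_image_iff)
    then have "card pr = 2" using \<open>card pr' = 2\<close> card_relabel[OF b, of pr] unfolding relabel_def by simp
    then show "pr' \<in> relabel \<sigma> ` mpairs P" using pr unfolding mpairs_def relabel_def by auto
  qed
  show "relabel \<sigma> ` mpairs P \<subseteq> mpairs (relabel \<sigma> P)"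
    unfolding mpairs_def using card_relabel[OF b] relabel_mono[of _ P \<sigma>] by auto
qed

lemma mchain_relabel:
  assumes b: "bij \<sigma>"
  shows "mchain k (relabel \<sigma> P) (relabel \<sigma> Q) (relabel \<sigma> H) = mchain k P Q H"
proof (induction k arbitrary: P H)
  case 0
  show ?case using relabel_eq_iff[OF b] relabel_empty_iff by simp
next
  case (Suc k)
  have inj: "inj_on (relabel \<sigma>) (mpairs P)" using inj_relabel[OF b] by (meson inj_on_subset subset_UNIV)
  have card: "card (mpairs (relabel \<sigma> P)) = card (mpairs P)"
    using mpairs_relabel[OF b] card_image[OF inj] by simp
  have merged: "(relabel \<sigma> P - relabel \<sigma> pr) \<union> {\<Union>(relabel \<sigma> pr)} = relabel \<sigma> ((P - pr) \<union> {\<Union>pr})"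
    and created: "relabel \<sigma> H - {\<Union>(relabel \<sigma> pr)} = relabel \<sigma> (H - {\<Union>pr})" for pr
    by (simp_all add: relabel_Diff[OF b] relabel_Un relabel_insert relabel_empty Union_relabel)
  have "mchain (Suc k) (relabel \<sigma> P) (relabel \<sigma> Q) (relabel \<sigma> H) =
     (\<Sum>pr\<in>mpairs P.
        if \<Union>(relabel \<sigma> pr) \<in> relabel \<sigma> H
        then mchain k ((relabel \<sigma> P - relabel \<sigma> pr) \<union> {\<Union>(relabel \<sigma> pr)}) (relabel \<sigma> Q)
               (relabel \<sigma> H - {\<Union>(relabel \<sigma> pr)}) / real (card (mpairs (relabel \<sigma> P)))
        else 0)"
    unfolding mchain.simps mpairs_relabel[OF b] by (subst sum.reindex[OF inj]) simp
  also have "\<dots> = mchain (Suc k) P Q H"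
    unfolding merged created Suc.IH card by (simp add: Union_relabel image_mem_relabel_iff[OF b])
  finally show ?case .
qed

lemma coalw_relabel: "bij \<sigma> \<Longrightarrow> coalw t (relabel \<sigma> P) (relabel \<sigma> Q) (relabel \<sigma> H) = coalw t P Q H"
  unfolding coalw_def by (simp add: card_relabel mchain_relabel)

lemma rootw_relabel: "bij \<sigma> \<Longrightarrow> rootw (relabel \<sigma> P) (relabel \<sigma> Q) (relabel \<sigma> H) = rootw P Q H"
  unfolding rootw_def by (simp add: card_relabel mchain_relabel)

lemma rtrancl_comparable_if_unique_predecessors:
  assumes "(u, l) \<in> S\<^sup>*" "(w, l) \<in> S\<^sup>*"
    and unique: "\<And>x y z. (x, z) \<in> S \<Longrightarrow> (y, z) \<in> S \<Longrightarrow> (u, z) \<in> S\<^sup>+ \<Longrightarrow> (w, z) \<in> S\<^sup>+ \<Longrightarrow> x = y"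
  shows "(u, w) \<in> S\<^sup>* \<or> (w, u) \<in> S\<^sup>*"
  using assms(1,2)
proof (induction l rule: rtrancl_induct)
  case (step y z)
  from \<open>(w, z) \<in> S\<^sup>*\<close> consider "w = z" | y' where "(w, y') \<in> S\<^sup>*" "(y', z) \<in> S"
    by (meson rtranclE)
  then show ?case
  proof cases
    case 1
    then show ?thesis using step.hyps by auto
  next
    case 2
    have "(u, z) \<in> S\<^sup>+" using step.hyps(1,2) by (rule rtrancl_into_trancl1)
    moreover have "(w, z) \<in> S\<^sup>+" using 2 by (rule rtrancl_into_trancl1)
    ultimately have "y' = y" using unique[OF 2(2) step.hyps(2)] by blast
    then show ?thesis using step.IH 2(1) by simp
  qed
qed simp

lemma is_path_append:
  "is_path Es src tgt (xs @ ys) u w \<longleftrightarrow> (\<exists>m. is_path Es src tgt xs u m \<and> is_path Es src tgt ys m w)"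
  by (induction xs arbitrary: u) auto

lemma is_path_target_unique: "is_path Es src tgt q u w \<Longrightarrow> is_path Es src tgt q u w' \<Longrightarrow> w = w'"
  by (induction q arbitrary: u) auto

lemma rtrancl_edge_rel_is_path:
  assumes "(u, v) \<in> {(src e, tgt e) | e. e \<in> Es'}\<^sup>*" "Es' \<subseteq> Es"
  shows "\<exists>q. is_path Es src tgt q u v \<and> set q \<subseteq> Es'"
  using assms(1)
proof (induction v rule: rtrancl_induct)
  case base
  then show ?case by (auto intro: exI[of _ "[]"])
next
  case (step y z)
  then obtain q where q: "is_path Es src tgt q u y" "set q \<subseteq> Es'" by blast
  from step obtain e where e: "e \<in> Es'" "src e = y" "tgt e = z" by auto
  have "is_path Es src tgt (q @ [e]) u z" using q e assms(2) by (auto simp: is_path_append)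
  then show ?case using q e by (intro exI[of _ "q @ [e]"]) auto
qed

lemma taxon_fiber_card_two:
  fixes f :: "taxon \<Rightarrow> 'a"
  assumes "f X = f Y" "f Z \<noteq> f X" "X \<noteq> Y" "\<And>W. W = X \<or> W = Y \<or> W = Z"
  shows "card {W. f W = f X} = 2"
proof -
  have "{W. f W = f X} = {X, Y}"
  proof (rule set_eqI)
    fix W show "W \<in> {W. f W = f X} \<longleftrightarrow> W \<in> {X, Y}" using assms(1,2) assms(4)[of W] by auto
  qed
  then show ?thesis using assms(3) by simp
qed

lemma taxon_fun_fiber_card_two:
  fixes f :: "taxon \<Rightarrow> 'a"
  assumes "finite F" "card F \<le> 2" "range f \<subseteq> F" "\<exists>W. f W \<noteq> f A"
  shows "\<exists>X. card {W. f W = f X} = 2"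
proof -
  have all: "W = A \<or> W = B \<or> W = C" for W by (cases W) simp_all
  obtain W0 where W0: "f W0 \<noteq> f A" using assms(4) ..
  show ?thesis
  proof (cases "f A = f B")
    case AB: True
    have "f C \<noteq> f A" using W0 AB by (cases W0) auto
    then have "card {W. f W = f A} = 2" by (rule taxon_fiber_card_two[OF AB]) (use all in auto)
    then show ?thesis ..
  next
    case AB: False
    show ?thesis
    proof (cases "f A = f C")
      case AC: True
      have "f B \<noteq> f A" using AB by simp
      then have "card {W. f W = f A} = 2" by (rule taxon_fiber_card_two[OF AC]) (use all in auto)
      then show ?thesis ..
    next
      case AC: False
      show ?thesis
      proof (cases "f B = f C")
        case BC: True
        have "f A \<noteq> f B" using AB by simp
        then have "card {W. f W = f B} = 2" by (rule taxon_fiber_card_two[OF BC]) (use all in auto)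
        then show ?thesis ..
      next
        case BC: False
        then have "card {f A, f B, f C} = 3" using AB AC by simp
        moreover have "card {f A, f B, f C} \<le> card F" using assms(1,3) by (intro card_mono) auto
        ultimately show ?thesis using assms(2) by simp
      qed
    qed
  qed
qed

locale network =
  fixes V :: "'v set" and Es :: "'e set" and src tgt :: "'e \<Rightarrow> 'v" and \<rho> :: 'v
    and lab :: "'v \<Rightarrow> taxon"
  assumes net: "phylo_net3 V Es src tgt \<rho> lab"
begin

definition edge_rel :: "('v \<times> 'v) set" where
  "edge_rel = {(src e, tgt e) | e. e \<in> Es}"

lemma finite_Es: "finite Es" and root_in_V: "\<rho> \<in> V"
  and src_in_V: "e \<in> Es \<Longrightarrow> src e \<in> V" and tgt_in_V: "e \<in> Es \<Longrightarrow> tgt e \<in> V"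
  using net unfolding phylo_net3_def by auto

lemma acyclic_edge_rel: "acyclic edge_rel"
  using net unfolding phylo_net3_def edge_rel_def by auto

lemma finite_edge_rel: "finite edge_rel"
proof -
  have "edge_rel = (\<lambda>e. (src e, tgt e)) ` Es" unfolding edge_rel_def by auto
  then show ?thesis using finite_Es by simp
qed

lemma wf_edge_rel: "wf edge_rel"
  using finite_acyclic_wf[OF finite_edge_rel acyclic_edge_rel] .

lemma wf_converse_edge_rel: "wf (edge_rel\<inverse>)"
  using finite_acyclic_wf_converse[OF finite_edge_rel acyclic_edge_rel] .

lemma edge_relI: "e \<in> Es \<Longrightarrow> (src e, tgt e) \<in> edge_rel"
  unfolding edge_rel_def by auto

lemma edge_not_reaching_src: "e \<in> Es \<Longrightarrow> (tgt e, src e) \<notin> edge_rel\<^sup>*"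
  using acyclic_edge_rel edge_relI unfolding acyclic_def by (meson rtrancl_into_trancl2)

lemma trancl_edge_rel_in_V: "(u, z) \<in> edge_rel\<^sup>+ \<Longrightarrow> z \<in> V"
  by (induction rule: trancl.induct) (auto simp: edge_rel_def tgt_in_V)

lemma tgt_not_root: "e \<in> Es \<Longrightarrow> tgt e \<noteq> \<rho>"
proof
  assume "e \<in> Es" "tgt e = \<rho>"
  then have "e \<in> {e \<in> Es. tgt e = \<rho>}" by auto
  moreover have "indeg Es tgt \<rho> = 0" using net unfolding phylo_net3_def by auto
  ultimately show False using finite_Es unfolding indeg_def by auto
qed

lemma outdeg_root: "outdeg Es src \<rho> = 2"
  using net unfolding phylo_net3_def by auto

lemma node_degrees: "v \<in> V \<Longrightarrow> v \<noteq> \<rho> \<Longrightarrow>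
        (indeg Es tgt v = 1 \<and> outdeg Es src v = 2) \<or>
        (indeg Es tgt v = 1 \<and> outdeg Es src v = 0) \<or>
        (indeg Es tgt v = 2 \<and> outdeg Es src v = 1)"
  using net unfolding phylo_net3_def by blast

lemma outdeg_le_2: "v \<in> V \<Longrightarrow> outdeg Es src v \<le> 2"
  by (cases "v = \<rho>") (use node_degrees[of v] outdeg_root in auto)

lemma outdeg_src_nonzero: "e \<in> Es \<Longrightarrow> outdeg Es src (src e) \<noteq> 0"
  using finite_Es unfolding outdeg_def by auto

lemma has_in_edge: "v \<in> V \<Longrightarrow> v \<noteq> \<rho> \<Longrightarrow> \<exists>e\<in>Es. tgt e = v"
proof -
  assume "v \<in> V" "v \<noteq> \<rho>"
  then have "indeg Es tgt v \<noteq> 0" using node_degrees by fastforce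
  then show ?thesis unfolding indeg_def by (metis (mono_tags, lifting) card.empty empty_Collect_eq)
qed

lemma root_reaches: "v \<in> V \<Longrightarrow> (\<rho>, v) \<in> edge_rel\<^sup>*"
proof (induction v rule: wf_induct_rule[OF wf_edge_rel])
  case (1 v)
  show ?case
  proof (cases "v = \<rho>")
    case False
    then obtain e where "e \<in> Es" "tgt e = v" using has_in_edge 1 by blast
    then have "(src e, v) \<in> edge_rel" "src e \<in> V" using edge_relI src_in_V by auto
    then show ?thesis using 1 by (meson rtrancl.rtrancl_into_rtrancl)
  qed simp
qed

lemma edge_rel_is_path: "(u, v) \<in> edge_rel\<^sup>* \<Longrightarrow> \<exists>q. is_path Es src tgt q u v"
  using rtrancl_edge_rel_is_path[where Es'=Es and Es=Es and src=src and tgt=tgt] unfolding edge_rel_def by blast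

definition leaf_of :: "taxon \<Rightarrow> 'v" where
  "leaf_of W = inv_into (leaves V Es src \<rho>) lab W"

lemma bij_lab: "bij_betw lab (leaves V Es src \<rho>) UNIV"
  using net unfolding phylo_net3_def by auto

lemma leaf_of_leaves: "leaf_of W \<in> leaves V Es src \<rho>" and lab_leaf_of: "lab (leaf_of W) = W"
  using bij_lab unfolding leaf_of_def by (auto simp: bij_betw_def inv_into_into f_inv_into_f)

lemma leaf_of_lab: "v \<in> leaves V Es src \<rho> \<Longrightarrow> leaf_of (lab v) = v"
  using bij_lab unfolding leaf_of_def by (simp add: bij_betw_def)

lemma leaf_of_in_V: "leaf_of W \<in> V" and leaf_of_not_root: "leaf_of W \<noteq> \<rho>"
  and outdeg_leaf_of: "outdeg Es src (leaf_of W) = 0"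
  using leaf_of_leaves unfolding leaves_def by auto

lemma src_not_leaf_of: "e \<in> Es \<Longrightarrow> src e \<noteq> leaf_of W"
  using outdeg_leaf_of outdeg_src_nonzero by metis

lemma root_path_to_leaf: "\<exists>q. is_path Es src tgt q \<rho> (leaf_of W)"
  using edge_rel_is_path[OF root_reaches[OF leaf_of_in_V]] .

lemma path_to_leaf_extension:
  assumes "is_path Es src tgt q \<rho> (leaf_of W)" "is_path Es src tgt (q @ rest) \<rho> (leaf_of W')"
  shows "rest = [] \<and> W' = W"
proof -
  obtain m where m: "is_path Es src tgt q \<rho> m" "is_path Es src tgt rest m (leaf_of W')"
    using assms(2) is_path_append by metis
  have "m = leaf_of W" using is_path_target_unique m(1) assms(1) by metis
  then have "rest = []" using m(2) src_not_leaf_of by (cases rest) auto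
  then have "leaf_of W' = leaf_of W" using m(2) \<open>m = leaf_of W\<close> by simp
  then show ?thesis using \<open>rest = []\<close> lab_leaf_of by metis
qed

lemma cluster_in_parental_trees:
  assumes "\<And>W. is_path Es src tgt (p W) \<rho> (leaf_of W)" "is_path Es src tgt q \<rho> w" "w \<in> V"
    and "card {W. prefix q (p W)} = 2"
  shows "{W. prefix q (p W)} \<in> parental_trees V Es src tgt \<rho> lab"
proof -
  have "\<forall>W. mul_tree_leaf_copy V Es src tgt \<rho> lab W (p W)"
    unfolding mul_tree_leaf_copy_def using assms(1) leaf_of_leaves lab_leaf_of by blast
  moreover have "q \<in> mul_tree_nodes V Es src tgt \<rho>"
    unfolding mul_tree_nodes_def using assms(2,3) by blast
  ultimately show ?thesis unfolding parental_trees_def using assms(4) by blast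
qed

text \<open>Choose root-to-leaf paths for all taxa; right below their longest common prefix the
  paths branch along the at most two out-edges of a node, so two taxa stay together.\<close>
lemma parental_trees_nonempty: "\<exists>t. t \<in> parental_trees V Es src tgt \<rho> lab"
proof -
  define p where "p W = (SOME q. is_path Es src tgt q \<rho> (leaf_of W))" for W
  have p: "is_path Es src tgt (p W) \<rho> (leaf_of W)" for W
    unfolding p_def by (rule someI_ex[OF root_path_to_leaf])
  define q0 where "q0 = Longest_common_prefix (range p)"
  define r where "r W = drop (length q0) (p W)" for W
  have "prefix q0 (p W)" for W unfolding q0_def by (rule Longest_common_prefix_prefix) simp
  then have r: "p W = q0 @ r W" for W unfolding r_def by (metis append_eq_conv_conj prefix_def)
  have r_nonempty: "r W \<noteq> []" for W
  proof
    assume "r W = []"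
    obtain W' where "W' \<noteq> W" by (metis taxon.distinct(1))
    moreover have "is_path Es src tgt (p W @ r W') \<rho> (leaf_of W')"
      using p[of W'] r[of W'] r[of W] \<open>r W = []\<close> by simp
    ultimately show False using path_to_leaf_extension[OF p] by blast
  qed
  define ed where "ed W = hd (r W)" for W
  have p_ed: "p W = q0 @ ed W # tl (r W)" for W using r r_nonempty by (simp add: ed_def)
  obtain u where u: "is_path Es src tgt q0 \<rho> u" using p[of A] p_ed is_path_append by metis
  have ed_out: "ed W \<in> {e \<in> Es. src e = u}" for W
    using p[of W] u is_path_target_unique unfolding p_ed is_path_append by fastforce
  have not_const: "\<exists>W. ed W \<noteq> ed A"
  proof (rule ccontr)
    assume "\<nexists>W. ed W \<noteq> ed A"
    then have "\<forall>xs\<in>range p. prefix (q0 @ [ed A]) xs" using p_ed by (auto simp: prefix_def)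
    then have "length (q0 @ [ed A]) \<le> length q0"
      unfolding q0_def by (intro Longest_common_prefix_longest) auto
    then show False by simp
  qed
  have "u \<in> V" using ed_out[of A] src_in_V by auto
  then have "card {e \<in> Es. src e = u} \<le> 2" using outdeg_le_2 unfolding outdeg_def by blast
  moreover have "range ed \<subseteq> {e \<in> Es. src e = u}" using ed_out by blast
  moreover have "finite {e \<in> Es. src e = u}" using finite_Es by simp
  ultimately obtain X where X: "card {W. ed W = ed X} = 2"
    using taxon_fun_fiber_card_two not_const by blast
  have cluster: "{W. prefix (q0 @ [ed X]) (p W)} = {W. ed W = ed X}"
    unfolding p_ed by auto
  have "is_path Es src tgt (q0 @ [ed X]) \<rho> (tgt (ed X))"
    using u ed_out by (auto simp: is_path_append)
  then have "{W. prefix (q0 @ [ed X]) (p W)} \<in> parental_trees V Es src tgt \<rho> lab"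
    using X ed_out tgt_in_V unfolding cluster[symmetric]
    by (intro cluster_in_parental_trees[OF p]) auto
  then show ?thesis by blast
qed

end

section \<open>Trails of taxa in a coalescent history\<close>

locale history = network V Es src tgt \<rho> lab
  for V :: "'v set" and Es :: "'e set" and src tgt :: "'e \<Rightarrow> 'v" and \<rho> :: 'v and lab :: "'v \<Rightarrow> taxon" +
  fixes h :: "'e \<Rightarrow> taxon set set \<times> taxon set set \<times> taxon set set"
  assumes consistent: "consistent_history V Es src tgt \<rho> lab h"
    and edge_merges: "e \<in> Es \<Longrightarrow> merges (fst (h e)) (fst (snd (h e))) (snd (snd (h e)))"
begin

abbreviation entering where "entering e \<equiv> fst (h e)"
abbreviation leaving where "leaving e \<equiv> fst (snd (h e))"
abbreviation created where "created e \<equiv> snd (snd (h e))"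
abbreviation lins where "lins v \<equiv> bottom_lineages Es src lab h v"

definition trail :: "taxon \<Rightarrow> ('v \<times> 'v) set" where
  "trail W = {(src e, tgt e) | e. e \<in> Es \<and> W \<in> \<Union>(entering e)}"

lemma trail_subset_edge_rel: "trail W \<subseteq> edge_rel"
  unfolding trail_def edge_rel_def by auto

lemma trailI: "e \<in> Es \<Longrightarrow> W \<in> \<Union>(entering e) \<Longrightarrow> (src e, tgt e) \<in> trail W"
  unfolding trail_def by auto

lemma trailE:
  assumes "(x, z) \<in> trail W"
  obtains e where "e \<in> Es" "src e = x" "tgt e = z" "W \<in> \<Union>(entering e)"
  using assms unfolding trail_def by blast

lemma rtrancl_trail_edge_rel: "(u, v) \<in> (trail W)\<^sup>* \<Longrightarrow> (u, v) \<in> edge_rel\<^sup>*"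
  using rtrancl_mono[OF trail_subset_edge_rel] by blast

lemma trancl_trail_edge_rel: "(u, v) \<in> (trail W)\<^sup>+ \<Longrightarrow> (u, v) \<in> edge_rel\<^sup>+"
  using trancl_mono[OF _ trail_subset_edge_rel] by blast

lemma trail_is_path:
  assumes "(u, v) \<in> (trail W)\<^sup>*"
  shows "\<exists>q. is_path Es src tgt q u v \<and> (\<forall>e\<in>set q. W \<in> \<Union>(entering e))"
proof -
  have "trail W = {(src e, tgt e) | e. e \<in> {e \<in> Es. W \<in> \<Union>(entering e)}}"
    unfolding trail_def by simp
  then have "(u, v) \<in> {(src e, tgt e) | e. e \<in> {e \<in> Es. W \<in> \<Union>(entering e)}}\<^sup>*"
    using assms by simp
  from rtrancl_edge_rel_is_path[OF this Collect_subset] obtain q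
    where "is_path Es src tgt q u v" "set q \<subseteq> {e \<in> Es. W \<in> \<Union>(entering e)}" by blast
  then show ?thesis by (intro exI[of _ q]) auto
qed

lemma consistent_at: "v \<in> V - {\<rho>} \<Longrightarrow> lins v = \<Union>{entering e | e. e \<in> Es \<and> tgt e = v} \<and>
   (\<forall>e1\<in>Es. \<forall>e2\<in>Es. tgt e1 = v \<and> tgt e2 = v \<and> e1 \<noteq> e2 \<longrightarrow> entering e1 \<inter> entering e2 = {})"
  using consistent unfolding consistent_history_def by (rule bspec)

lemma lins_in: "v \<in> V \<Longrightarrow> v \<noteq> \<rho> \<Longrightarrow> lins v = \<Union>{entering e | e. e \<in> Es \<and> tgt e = v}"
  using consistent_at by blast

lemma lins_out: "outdeg Es src v \<noteq> 0 \<Longrightarrow> lins v = \<Union>{leaving e | e. e \<in> Es \<and> src e = v}"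
  unfolding bottom_lineages_def by simp

lemma lins_leaf: "outdeg Es src v = 0 \<Longrightarrow> lins v = {{lab v}}"
  unfolding bottom_lineages_def by simp

lemma entering_subset_lins: "e \<in> Es \<Longrightarrow> entering e \<subseteq> lins (tgt e)"
  using lins_in[OF tgt_in_V tgt_not_root] by blast

lemma leaving_subset_lins: "e \<in> Es \<Longrightarrow> leaving e \<subseteq> lins (src e)"
  using lins_out[OF outdeg_src_nonzero] by blast

lemma entering_disjoint:
  assumes "e1 \<in> Es" "e2 \<in> Es" "tgt e1 = tgt e2" "e1 \<noteq> e2"
  shows "entering e1 \<inter> entering e2 = {}"
proof -
  have "tgt e1 \<in> V - {\<rho>}" using tgt_in_V[OF assms(1)] tgt_not_root[OF assms(1)] by simp
  from consistent_at[OF this] show ?thesis using assms by simp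
qed

lemma Union_leaving: "e \<in> Es \<Longrightarrow> \<Union>(leaving e) = \<Union>(entering e)"
  using edge_merges merges_Union by blast

lemma trail_to_leaf: "v \<in> V \<Longrightarrow> W \<in> \<Union>(lins v) \<Longrightarrow> (v, leaf_of W) \<in> (trail W)\<^sup>*"
proof (induction v rule: wf_induct_rule[OF wf_converse_edge_rel])
  case (1 v)
  show ?case
  proof (cases "outdeg Es src v = 0")
    case True
    then have "W = lab v" using 1(3) lins_leaf by simp
    moreover have "v \<in> leaves V Es src \<rho>" using True 1(2) outdeg_root unfolding leaves_def by auto
    ultimately have "leaf_of W = v" using leaf_of_lab by simp
    then show ?thesis by simp
  next
    case False
    then obtain e where e: "e \<in> Es" "src e = v" "W \<in> \<Union>(leaving e)" using 1(3) lins_out by auto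
    then have W: "W \<in> \<Union>(entering e)" using Union_leaving by auto
    then have "W \<in> \<Union>(lins (tgt e))" using entering_subset_lins e(1) by blast
    moreover have "(tgt e, v) \<in> edge_rel\<inverse>" using edge_relI e by auto
    ultimately have "(tgt e, leaf_of W) \<in> (trail W)\<^sup>*" using 1 tgt_in_V e(1) by blast
    moreover have "(v, tgt e) \<in> trail W" using trailI[OF e(1) W] e(2) by simp
    ultimately show ?thesis by (meson converse_rtrancl_into_rtrancl)
  qed
qed

lemma trail_from_root: "v \<in> V \<Longrightarrow> W \<in> \<Union>(lins v) \<Longrightarrow> (\<rho>, v) \<in> (trail W)\<^sup>*"
proof (induction v rule: wf_induct_rule[OF wf_edge_rel])
  case (1 v)
  show ?case
  proof (cases "v = \<rho>")
    case False
    obtain b where b: "b \<in> lins v" "W \<in> b" using 1(3) by blast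
    then obtain e where e: "e \<in> Es" "tgt e = v" "b \<in> entering e" using lins_in[OF 1(2) False] by blast
    then have We: "W \<in> \<Union>(entering e)" using b(2) by blast
    then have "W \<in> \<Union>(lins (src e))" using Union_leaving[OF e(1)] leaving_subset_lins[OF e(1)] by blast
    moreover have "(src e, v) \<in> edge_rel" using edge_relI[OF e(1)] e(2) by simp
    ultimately have "(\<rho>, src e) \<in> (trail W)\<^sup>*" using 1(1) src_in_V[OF e(1)] by blast
    moreover have "(src e, v) \<in> trail W" using trailI[OF e(1) We] e(2) by simp
    ultimately show ?thesis by (rule rtrancl_into_rtrancl)
  qed simp
qed

lemma taxon_in_lins_leaf: "W \<in> \<Union>(lins (leaf_of W))"
  using lins_leaf[OF outdeg_leaf_of] lab_leaf_of by simp

lemma taxon_in_lins_root: "W \<in> \<Union>(lins \<rho>)"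
proof -
  have "(\<rho>, leaf_of W) \<in> (trail W)\<^sup>*" by (rule trail_from_root[OF leaf_of_in_V taxon_in_lins_leaf])
  then obtain z where "(\<rho>, z) \<in> trail W"
    by (metis converse_rtranclE leaf_of_not_root)
  then obtain e where e: "e \<in> Es" "src e = \<rho>" "W \<in> \<Union>(entering e)" by (rule trailE)
  then obtain B where "B \<in> leaving e" "W \<in> B" using Union_leaving[OF e(1)] by blast
  moreover have "leaving e \<subseteq> lins \<rho>" using leaving_subset_lins[OF e(1)] e(2) by simp
  ultimately show ?thesis by blast
qed

lemma unique_carrier_into:
  assumes "lineage_set (lins w)" "e1 \<in> Es" "e2 \<in> Es" "tgt e1 = w" "tgt e2 = w"
    "W \<in> \<Union>(entering e1)" "W \<in> \<Union>(entering e2)"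
  shows "e1 = e2"
proof (rule ccontr)
  assume ne: "e1 \<noteq> e2"
  obtain b1 b2 where b: "b1 \<in> entering e1" "W \<in> b1" "b2 \<in> entering e2" "W \<in> b2"
    using assms(6,7) by blast
  have "b1 \<in> lins w" using entering_subset_lins[OF assms(2)] b(1) assms(4) by blast
  moreover have "b2 \<in> lins w" using entering_subset_lins[OF assms(3)] b(3) assms(5) by blast
  ultimately have "b1 = b2" using lineage_set_unique_block[OF assms(1)] b(2,4) by blast
  moreover have "entering e1 \<inter> entering e2 = {}"
    using entering_disjoint[OF assms(2,3) _ ne] assms(4,5) by simp
  ultimately show False using b(1,3) by blast
qed

text \<open>On the trail of a taxon, the edge entering a node is unique as long as the lineages at
  that node are disjoint; so a trail ending at the target of a carrying edge passes its source.\<close>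
lemma trail_reaches_src:
  assumes "e \<in> Es" "W \<in> \<Union>(entering e)" "(x, tgt e) \<in> (trail W)\<^sup>+" "lineage_set (lins (tgt e))"
  shows "(x, src e) \<in> (trail W)\<^sup>*"
proof -
  obtain y where y: "(x, y) \<in> (trail W)\<^sup>*" "(y, tgt e) \<in> trail W"
    using assms(3) by (blast dest: tranclD2)
  obtain e' where e': "e' \<in> Es" "src e' = y" "tgt e' = tgt e" "W \<in> \<Union>(entering e')"
    using y(2) by (rule trailE)
  have "e' = e" by (rule unique_carrier_into[OF assms(4) e'(1) assms(1) e'(3) refl e'(4) assms(2)])
  then show ?thesis using y(1) e'(2) by simp
qed

lemma trail_targets_comparable:
  assumes e: "e1 \<in> Es" "e2 \<in> Es" "W \<in> \<Union>(entering e1)" "W \<in> \<Union>(entering e2)"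
    and below: "\<And>z. (tgt e1, z) \<in> (trail W)\<^sup>+ \<Longrightarrow> lineage_set (lins z)"
  shows "(tgt e1, tgt e2) \<in> (trail W)\<^sup>* \<or> (tgt e2, tgt e1) \<in> (trail W)\<^sup>*"
proof (rule rtrancl_comparable_if_unique_predecessors)
  show "(tgt e1, leaf_of W) \<in> (trail W)\<^sup>*"
    using entering_subset_lins[OF e(1)] e(3) by (intro trail_to_leaf[OF tgt_in_V[OF e(1)]]) blast
  show "(tgt e2, leaf_of W) \<in> (trail W)\<^sup>*"
    using entering_subset_lins[OF e(2)] e(4) by (intro trail_to_leaf[OF tgt_in_V[OF e(2)]]) blast
next
  fix x y z assume xz: "(x, z) \<in> trail W" and yz: "(y, z) \<in> trail W" and "(tgt e1, z) \<in> (trail W)\<^sup>+"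
  have lz: "lineage_set (lins z)" using \<open>(tgt e1, z) \<in> (trail W)\<^sup>+\<close> by (rule below)
  obtain a1 where a1: "a1 \<in> Es" "src a1 = x" "tgt a1 = z" "W \<in> \<Union>(entering a1)" using xz by (rule trailE)
  obtain a2 where a2: "a2 \<in> Es" "src a2 = y" "tgt a2 = z" "W \<in> \<Union>(entering a2)" using yz by (rule trailE)
  have "a1 = a2" by (rule unique_carrier_into[OF lz a1(1) a2(1) a1(3) a2(3) a1(4) a2(4)])
  then show "x = y" using a1 a2 by simp
qed

lemma no_trail_between_siblings:
  assumes "a \<in> Es" "b \<in> Es" "src a = src b" "W \<in> \<Union>(entering b)" "tgt a \<noteq> tgt b"
    "lineage_set (lins (tgt b))" "(tgt a, tgt b) \<in> (trail W)\<^sup>*"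
  shows False
proof -
  have "(tgt a, tgt b) \<in> (trail W)\<^sup>+" using assms(5,7) by (simp add: rtrancl_eq_or_trancl)
  then have "(tgt a, src b) \<in> (trail W)\<^sup>*" by (rule trail_reaches_src[OF assms(2,4) _ assms(6)])
  then have "(tgt a, src a) \<in> edge_rel\<^sup>*" using assms(3) rtrancl_trail_edge_rel by simp
  then show False using edge_not_reaching_src[OF assms(1)] by simp
qed

lemma out_edges_carrying_same_taxon:
  assumes c: "c1 \<in> Es" "c2 \<in> Es" "src c1 = v" "src c2 = v" "W \<in> \<Union>(entering c1)" "W \<in> \<Union>(entering c2)"
    and below: "\<And>z. (v, z) \<in> edge_rel\<^sup>+ \<Longrightarrow> lineage_set (lins z)"
  shows "c1 = c2"
proof -
  have below_tgt: "lineage_set (lins z)" if "(tgt c, z) \<in> (trail W)\<^sup>*" "c \<in> Es" "src c = v" for c z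
  proof (rule below)
    have "(tgt c, z) \<in> edge_rel\<^sup>*" using that(1) by (rule rtrancl_trail_edge_rel)
    then show "(v, z) \<in> edge_rel\<^sup>+" using edge_relI[OF that(2)] that(3) by (metis rtrancl_into_trancl2)
  qed
  have lins1: "lineage_set (lins (tgt c1))" by (rule below_tgt[OF rtrancl_refl c(1,3)])
  have lins2: "lineage_set (lins (tgt c2))" by (rule below_tgt[OF rtrancl_refl c(2,4)])
  show ?thesis
  proof (cases "tgt c1 = tgt c2")
    case True
    show ?thesis by (rule unique_carrier_into[OF lins1 c(1,2) refl True[symmetric] c(5,6)])
  next
    case False
    have "(tgt c1, tgt c2) \<in> (trail W)\<^sup>* \<or> (tgt c2, tgt c1) \<in> (trail W)\<^sup>*"
    proof (rule trail_targets_comparable[OF c(1,2,5,6)])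
      fix z assume "(tgt c1, z) \<in> (trail W)\<^sup>+"
      then show "lineage_set (lins z)" using below_tgt[OF _ c(1,3)] by (simp add: trancl_into_rtrancl)
    qed
    moreover have src: "src c1 = src c2" using c(3,4) by simp
    ultimately show ?thesis
      using no_trail_between_siblings[OF c(1,2) src c(6) False lins2]
        no_trail_between_siblings[OF c(2,1) src[symmetric] c(5) not_sym[OF False] lins1] by blast
  qed
qed

lemma lineage_set_leaving_if_tgt:
  assumes "e \<in> Es" "lineage_set (lins (tgt e))"
  shows "lineage_set (leaving e)"
proof -
  have "lineage_set (entering e)" by (rule lineage_set_subset[OF assms(2) entering_subset_lins[OF assms(1)]])
  then show ?thesis by (rule merges_lineage_set[OF edge_merges[OF assms(1)]])
qed

text \<open>The lineages at every node are pairwise disjoint: by induction from the leaves, two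
  out-edges of a node cannot carry the same taxon, as their trails would merge below it.\<close>
lemma lineage_set_lins: "v \<in> V \<Longrightarrow> lineage_set (lins v)"
proof (induction v rule: wf_induct_rule[OF wf_trancl[OF wf_converse_edge_rel]])
  case (1 v)
  have below: "lineage_set (lins z)" if "(v, z) \<in> edge_rel\<^sup>+" for z
  proof -
    have "(z, v) \<in> (edge_rel\<inverse>)\<^sup>+" using that by (simp add: trancl_converse)
    then show ?thesis using 1(1) trancl_edge_rel_in_V[OF that] by blast
  qed
  show ?case
  proof (cases "outdeg Es src v = 0")
    case True
    then show ?thesis using lins_leaf unfolding lineage_set_def by simp
  next
    case False
    have leaving: "lineage_set (leaving c)" if "c \<in> Es" "src c = v" for c
    proof -
      have "(v, tgt c) \<in> edge_rel\<^sup>+" using edge_relI[OF that(1)] that(2) by auto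
      then show ?thesis by (rule lineage_set_leaving_if_tgt[OF that(1) below])
    qed
    show ?thesis unfolding lineage_set_def
    proof (intro conjI ballI impI)
      fix b assume "b \<in> lins v"
      then obtain c where "c \<in> Es" "src c = v" "b \<in> leaving c" using lins_out[OF False] by auto
      then show "b \<noteq> {}" using leaving unfolding lineage_set_def by blast
    next
      fix b1 b2 assume b: "b1 \<in> lins v" "b2 \<in> lins v" "b1 \<noteq> b2"
      obtain c1 where c1: "c1 \<in> Es" "src c1 = v" "b1 \<in> leaving c1" using lins_out[OF False] b by auto
      obtain c2 where c2: "c2 \<in> Es" "src c2 = v" "b2 \<in> leaving c2" using lins_out[OF False] b by auto
      show "b1 \<inter> b2 = {}"
      proof (rule ccontr)
        assume "b1 \<inter> b2 \<noteq> {}"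
        then obtain W where W: "W \<in> b1" "W \<in> b2" by auto
        have "W \<in> \<Union>(leaving c1)" "W \<in> \<Union>(leaving c2)" using c1(3) c2(3) W by blast+
        then have "W \<in> \<Union>(entering c1)" "W \<in> \<Union>(entering c2)"
          using Union_leaving[OF c1(1)] Union_leaving[OF c2(1)] by simp_all
        then have "c1 = c2" using out_edges_carrying_same_taxon[OF c1(1) c2(1) c1(2) c2(2)] below by blast
        then have "b1 \<in> leaving c1" "b2 \<in> leaving c1" using c1(3) c2(3) by simp_all
        then have "b1 = b2" using lineage_set_unique_block[OF leaving[OF c1(1,2)]] W by blast
        then show False using b(3) by simp
      qed
    qed
  qed
qed

lemma lineage_set_entering:
  assumes "e \<in> Es" shows "lineage_set (entering e)"
  using lineage_set_subset[OF lineage_set_lins[OF tgt_in_V[OF assms]] entering_subset_lins[OF assms]] .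

lemma lineage_set_leaving:
  assumes "e \<in> Es" shows "lineage_set (leaving e)"
  using lineage_set_leaving_if_tgt[OF assms lineage_set_lins[OF tgt_in_V[OF assms]]] .

lemma unique_carrier:
  assumes "e1 \<in> Es" "e2 \<in> Es" "tgt e1 = tgt e2" "W \<in> \<Union>(entering e1)" "W \<in> \<Union>(entering e2)"
  shows "e1 = e2"
  using unique_carrier_into[OF lineage_set_lins[OF tgt_in_V[OF assms(1)]] assms(1,2) refl assms(3)[symmetric] assms(4,5)] .

lemma carriers_comparable:
  assumes e: "e1 \<in> Es" "e2 \<in> Es" "W \<in> \<Union>(entering e1)" "W \<in> \<Union>(entering e2)"
  shows "e1 = e2 \<or> (tgt e1, src e2) \<in> (trail W)\<^sup>* \<or> (tgt e2, src e1) \<in> (trail W)\<^sup>*"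
proof -
  have step: "a = b \<or> (tgt a, src b) \<in> (trail W)\<^sup>*"
    if "a \<in> Es" "b \<in> Es" "W \<in> \<Union>(entering a)" "W \<in> \<Union>(entering b)" "(tgt a, tgt b) \<in> (trail W)\<^sup>*" for a b
  proof (cases "tgt a = tgt b")
    case True
    then show ?thesis using unique_carrier[OF that(1,2) True that(3,4)] by simp
  next
    case False
    then have "(tgt a, tgt b) \<in> (trail W)\<^sup>+" using that(5) by (simp add: rtrancl_eq_or_trancl)
    from trail_reaches_src[OF that(2,4) this lineage_set_lins[OF tgt_in_V[OF that(2)]]] show ?thesis ..
  qed
  have "(tgt e1, tgt e2) \<in> (trail W)\<^sup>* \<or> (tgt e2, tgt e1) \<in> (trail W)\<^sup>*"
  proof (rule trail_targets_comparable[OF e])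
    fix z assume "(tgt e1, z) \<in> (trail W)\<^sup>+"
    then have "z \<in> V" using trancl_edge_rel_in_V trancl_trail_edge_rel by blast
    then show "lineage_set (lins z)" by (rule lineage_set_lins)
  qed
  then show ?thesis
  proof
    assume "(tgt e1, tgt e2) \<in> (trail W)\<^sup>*"
    then show ?thesis using step[OF e] by blast
  next
    assume "(tgt e2, tgt e1) \<in> (trail W)\<^sup>*"
    then show ?thesis using step[OF e(2,1,4,3)] by blast
  qed
qed

lemma trail_lineage_grows:
  assumes "(u, v) \<in> (trail W)\<^sup>*" "b \<in> lins v" "W \<in> b"
  shows "\<exists>b'\<in>lins u. W \<in> b' \<and> b \<subseteq> b'"
  using assms(1)
proof (induction u rule: converse_rtrancl_induct)
  case base
  then show ?case using assms(2,3) by blast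
next
  case (step u y)
  then obtain b' where b': "b' \<in> lins y" "W \<in> b'" "b \<subseteq> b'" by blast
  obtain e where e: "e \<in> Es" "src e = u" "tgt e = y" "W \<in> \<Union>(entering e)"
    using step(1) by (rule trailE)
  then obtain b0 where b0: "b0 \<in> entering e" "W \<in> b0" by blast
  have "b0 \<in> lins y" using entering_subset_lins[OF e(1)] b0(1) e(3) by blast
  then have "b0 = b'" using lineage_set_unique_block[OF lineage_set_lins[OF tgt_in_V[OF e(1)]]] e(3) b0(2) b'(1,2) by simp
  obtain B where B: "B \<in> leaving e" "b0 \<subseteq> B" using merges_refines[OF edge_merges[OF e(1)] b0(1)] by blast
  have "B \<in> lins u" using leaving_subset_lins[OF e(1)] B(1) e(2) by blast
  moreover have "W \<in> B" "b \<subseteq> B" using B(2) b0(2) b'(3) \<open>b0 = b'\<close> by blast+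
  ultimately show ?case by blast
qed

lemma created_in_lins_src:
  assumes "e \<in> Es" "S \<in> created e" "X \<in> S"
  shows "\<exists>B\<in>lins (src e). X \<in> B \<and> S \<subseteq> B"
proof -
  obtain B where B: "B \<in> leaving e" "S \<subseteq> B"
    using merges_created_subset[OF edge_merges[OF assms(1)] assms(2)] by blast
  have "B \<in> lins (src e)" using leaving_subset_lins[OF assms(1)] B(1) by blast
  then show ?thesis using B(2) assms(3) by blast
qed

end

section \<open>Where a cherry can be created\<close>

lemma lineage_set_three_singletons:
  assumes P: "lineage_set P" and XYZ: "{X} \<in> P" "{Y} \<in> P" "Z \<in> \<Union>P" and d: "X \<noteq> Y" "Z \<noteq> X" "Z \<noteq> Y"
    and all3: "\<And>W. W = X \<or> W = Y \<or> W = Z"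
  shows "P = {{X}, {Y}, {Z}}"
proof -
  have singleton_block: "b = {W}" if "b \<in> P" "{W} \<in> P" "W \<in> b" for b W
    using lineage_set_unique_block[OF P that(1,2) that(3)] by simp
  obtain b where b: "b \<in> P" "Z \<in> b" using XYZ(3) by blast
  have "b \<subseteq> {Z}"
  proof
    fix W assume W: "W \<in> b"
    have "W \<noteq> X"
    proof
      assume "W = X"
      then have "b = {X}" using singleton_block[OF b(1) XYZ(1)] W by simp
      then show False using b(2) d(2) by simp
    qed
    moreover have "W \<noteq> Y"
    proof
      assume "W = Y"
      then have "b = {Y}" using singleton_block[OF b(1) XYZ(2)] W by simp
      then show False using b(2) d(3) by simp
    qed
    ultimately show "W \<in> {Z}" using all3[of W] by simp
  qed
  then have "b = {Z}" using b(2) by blast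
  then have Z: "{Z} \<in> P" using b(1) by simp
  show ?thesis
  proof (rule set_eqI, rule iffI)
    fix b' assume b': "b' \<in> P"
    then obtain W where W: "W \<in> b'" using P unfolding lineage_set_def by blast
    consider "W = X" | "W = Y" | "W = Z" using all3 by blast
    then show "b' \<in> {{X}, {Y}, {Z}}"
      by cases (use singleton_block[OF b' _ W] XYZ(1,2) Z in simp_all)
  next
    fix b' assume "b' \<in> {{X}, {Y}, {Z}}"
    then show "b' \<in> P" using XYZ(1,2) Z by blast
  qed
qed

context history
begin

text \<open>If the lineage of the third taxon avoids the edge where the cherry is created, routing
  the copies of the two cherry taxa through that edge exhibits the cherry in the MUL-tree.\<close>
lemma cherry_parental_if_third_absent:
  assumes e: "e \<in> Es" and X: "{X} \<in> entering e" and Y: "{Y} \<in> entering e"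
    and Z: "Z \<notin> \<Union>(entering e)" and d: "X \<noteq> Y" "Z \<noteq> X" "Z \<noteq> Y"
    and all3: "\<And>W. W = X \<or> W = Y \<or> W = Z"
  shows "{X, Y} \<in> parental_trees V Es src tgt \<rho> lab"
proof -
  obtain r where r: "is_path Es src tgt r \<rho> (src e)"
    using edge_rel_is_path[OF root_reaches[OF src_in_V[OF e]]] by blast
  have down: "\<exists>d. is_path Es src tgt (r @ e # d) \<rho> (leaf_of W)" if W: "{W} \<in> entering e" for W
  proof -
    have "{W} \<in> lins (tgt e)" using entering_subset_lins[OF e] W by blast
    then have "W \<in> \<Union>(lins (tgt e))" by blast
    then have "(tgt e, leaf_of W) \<in> (trail W)\<^sup>*" by (rule trail_to_leaf[OF tgt_in_V[OF e]])
    then have "(tgt e, leaf_of W) \<in> edge_rel\<^sup>*" by (rule rtrancl_trail_edge_rel)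
    then obtain d where "is_path Es src tgt d (tgt e) (leaf_of W)" using edge_rel_is_path by blast
    then have "is_path Es src tgt (r @ e # d) \<rho> (leaf_of W)" using r e by (simp add: is_path_append)
    then show ?thesis ..
  qed
  obtain dX where dX: "is_path Es src tgt (r @ e # dX) \<rho> (leaf_of X)" using down[OF X] by blast
  obtain dY where dY: "is_path Es src tgt (r @ e # dY) \<rho> (leaf_of Y)" using down[OF Y] by blast
  have "(\<rho>, leaf_of Z) \<in> (trail Z)\<^sup>*" by (rule trail_from_root[OF leaf_of_in_V taxon_in_lins_leaf])
  from trail_is_path[OF this] obtain pZ
    where pZ: "is_path Es src tgt pZ \<rho> (leaf_of Z)" "\<forall>e'\<in>set pZ. Z \<in> \<Union>(entering e')" by blast
  define p where "p W = (if W = X then r @ e # dX else if W = Y then r @ e # dY else pZ)" for W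
  have p: "is_path Es src tgt (p W) \<rho> (leaf_of W)" for W
    using all3[of W] dX dY pZ(1) d unfolding p_def by auto
  have "e \<notin> set pZ" using pZ(2) Z by blast
  then have "\<not> prefix (r @ [e]) pZ" unfolding prefix_def by auto
  then have cluster: "{W. prefix (r @ [e]) (p W)} = {X, Y}"
    using all3 d unfolding p_def by (auto simp: prefix_def)
  have "is_path Es src tgt (r @ [e]) \<rho> (tgt e)" using r e by (simp add: is_path_append)
  from cluster_in_parental_trees[OF p this tgt_in_V[OF e]] show ?thesis
    unfolding cluster using d(1) by simp
qed

lemma nonparental_cherry_edge:
  assumes e: "e \<in> Es" and g: "{X, Y} \<in> created e" and nW: "{X, Y} \<notin> parental_trees V Es src tgt \<rho> lab"
    and d: "X \<noteq> Y" "Z \<noteq> X" "Z \<noteq> Y" and all3: "\<And>W. W = X \<or> W = Y \<or> W = Z"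
  shows "entering e = {{X}, {Y}, {Z}}"
proof -
  have XY: "{X} \<in> entering e \<and> {Y} \<in> entering e"
    using merges_cherry_singletons[OF edge_merges[OF e] lineage_set_entering[OF e] g d(1)] .
  have "Z \<in> \<Union>(entering e)"
  proof (rule ccontr)
    assume "Z \<notin> \<Union>(entering e)"
    from cherry_parental_if_third_absent[OF e _ _ this d all3] XY nW show False by simp
  qed
  with XY show ?thesis using lineage_set_three_singletons[OF lineage_set_entering[OF e] _ _ _ d all3] by simp
qed

lemma cherry_at_root:
  assumes "merges (lins \<rho>) Qr Hr" "{X, Y} \<in> Hr"
    and d: "X \<noteq> Y" "Z \<noteq> X" "Z \<noteq> Y" and all3: "\<And>W. W = X \<or> W = Y \<or> W = Z"
  shows "lins \<rho> = {{X}, {Y}, {Z}}"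
proof -
  have "{X} \<in> lins \<rho> \<and> {Y} \<in> lins \<rho>"
    using merges_cherry_singletons[OF assms(1) lineage_set_lins[OF root_in_V] assms(2) d(1)] .
  then show ?thesis
    using lineage_set_three_singletons[OF lineage_set_lins[OF root_in_V] _ _ taxon_in_lins_root d all3] by simp
qed

text \<open>Once the singleton lineage X enters an edge, X never again is a singleton above it; so
  only one edge can both receive the singleton X and create a cluster containing X and another taxon.\<close>
lemma cherry_created_once:
  assumes e: "e1 \<in> Es" "e2 \<in> Es" and X: "{X} \<in> entering e1" "{X} \<in> entering e2"
    and t: "{X, Z} \<in> created e1" "{X, Z} \<in> created e2" and d: "Z \<noteq> X"
  shows "e1 = e2"
proof -
  have no_path: False
    if ab: "a \<in> Es" "b \<in> Es" "{X} \<in> entering a" "{X, Z} \<in> created b" "(tgt a, src b) \<in> (trail X)\<^sup>*" for a b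
  proof -
    obtain B where B: "B \<in> lins (src b)" "X \<in> B" "{X, Z} \<subseteq> B"
      using created_in_lins_src[OF ab(2,4) insertI1] by blast
    obtain b' where b': "b' \<in> lins (tgt a)" "X \<in> b'" "B \<subseteq> b'"
      using trail_lineage_grows[OF ab(5) B(1,2)] by blast
    have "{X} \<in> lins (tgt a)" using entering_subset_lins[OF ab(1)] ab(3) by blast
    then have "b' = {X}"
      using lineage_set_unique_block[OF lineage_set_lins[OF tgt_in_V[OF ab(1)]] b'(1)] b'(2) by simp
    then show False using B(3) b'(3) d by blast
  qed
  have "e1 = e2 \<or> (tgt e1, src e2) \<in> (trail X)\<^sup>* \<or> (tgt e2, src e1) \<in> (trail X)\<^sup>*"
    using carriers_comparable[OF e] X by blast
  then show ?thesis using no_path[OF e(1) e(2) X(1) t(2)] no_path[OF e(2) e(1) X(2) t(1)] by blast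
qed

end

section \<open>Relabelling a history above an edge\<close>

lemma setcompr_eq_image_comp:
  assumes "\<And>x. P x \<Longrightarrow> f x = g (k x)"
  shows "{f x | x. P x} = g ` {k x | x. P x}"
proof -
  have "{f x | x. P x} = (\<lambda>x. g (k x)) ` {x. P x}" using assms by (auto simp: setcompr_eq_image)
  then show ?thesis by (simp add: setcompr_eq_image image_image)
qed

context network
begin

definition above :: "'e \<Rightarrow> 'e set" where
  "above e = {e' \<in> Es. (tgt e', src e) \<in> edge_rel\<^sup>*}"

definition relabel_triple :: "(taxon \<Rightarrow> taxon) \<Rightarrow> taxon set set \<times> taxon set set \<times> taxon set set
    \<Rightarrow> taxon set set \<times> taxon set set \<times> taxon set set" where
  "relabel_triple \<sigma> x = (relabel \<sigma> (fst x), relabel \<sigma> (fst (snd x)), relabel \<sigma> (snd (snd x)))"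

text \<open>Relabel the part of a history from the top of e upwards; the lineages entering e are
  kept, so that the history below e is unaffected.\<close>
definition swap_above :: "(taxon \<Rightarrow> taxon) \<Rightarrow> 'e \<Rightarrow> ('e \<Rightarrow> taxon set set \<times> taxon set set \<times> taxon set set)
    \<Rightarrow> 'e \<Rightarrow> taxon set set \<times> taxon set set \<times> taxon set set" where
  "swap_above \<sigma> e h = (\<lambda>e'. if e' \<in> above e then relabel_triple \<sigma> (h e')
      else if e' = e then (fst (h e), relabel \<sigma> (fst (snd (h e))), relabel \<sigma> (snd (snd (h e)))) else h e')"

lemma not_above_self: "e \<in> Es \<Longrightarrow> e \<notin> above e"
  unfolding above_def using edge_not_reaching_src by simp

lemma swap_above_inj:
  assumes "bij \<sigma>" "swap_above \<sigma> e h1 = swap_above \<sigma> e h2"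
  shows "h1 = h2"
proof
  fix e'
  have eq: "swap_above \<sigma> e h1 e' = swap_above \<sigma> e h2 e'" using assms(2) by simp
  consider "e' \<in> above e" | "e' \<notin> above e" "e' = e" | "e' \<notin> above e" "e' \<noteq> e" by blast
  then show "h1 e' = h2 e'"
  proof cases
    case 1
    then have "relabel_triple \<sigma> (h1 e') = relabel_triple \<sigma> (h2 e')" using eq unfolding swap_above_def by simp
    then show ?thesis unfolding relabel_triple_def using relabel_eq_iff[OF assms(1)] by (simp add: prod_eq_iff)
  next
    case 2
    then show ?thesis using eq relabel_eq_iff[OF assms(1)] unfolding swap_above_def by (simp add: prod_eq_iff)
  next
    case 3
    then show ?thesis using eq unfolding swap_above_def by simp
  qed
qed

lemma swap_above_PiE: "h \<in> Es \<rightarrow>\<^sub>E UNIV \<Longrightarrow> e \<in> Es \<Longrightarrow> swap_above \<sigma> e h \<in> Es \<rightarrow>\<^sub>E UNIV"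
  unfolding PiE_def extensional_def swap_above_def above_def by auto

lemma entering_swap_above:
  "fst (swap_above \<sigma> e h e') = (if e' \<in> above e then relabel \<sigma> (fst (h e')) else fst (h e'))"
  unfolding swap_above_def relabel_triple_def by simp

lemma created_swap_above: "e \<in> Es \<Longrightarrow> snd (snd (swap_above \<sigma> e h e)) = relabel \<sigma> (snd (snd (h e)))"
  unfolding swap_above_def using not_above_self by simp

lemma bottom_lineages_cong:
  assumes "\<And>c. c \<in> Es \<Longrightarrow> src c = v \<Longrightarrow> fst (snd (h1 c)) = fst (snd (h2 c))"
  shows "bottom_lineages Es src lab h1 v = bottom_lineages Es src lab h2 v"
proof -
  have "{fst (snd (h1 c)) | c. c \<in> Es \<and> src c = v} = {fst (snd (h2 c)) | c. c \<in> Es \<and> src c = v}"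
  proof (rule Collect_cong)
    fix x
    show "(\<exists>c. x = fst (snd (h1 c)) \<and> c \<in> Es \<and> src c = v) \<longleftrightarrow> (\<exists>c. x = fst (snd (h2 c)) \<and> c \<in> Es \<and> src c = v)"
      using assms by metis
  qed
  then show ?thesis unfolding bottom_lineages_def by simp
qed

lemma root_bottom_lineages:
  "bottom_lineages Es src lab h \<rho> = \<Union>{fst (snd (h e)) | e. e \<in> Es \<and> src e = \<rho>}"
  unfolding bottom_lineages_def using outdeg_root by simp

end

locale swap_setting = history V Es src tgt \<rho> lab h
  for V :: "'v set" and Es :: "'e set" and src tgt :: "'e \<Rightarrow> 'v" and \<rho> :: 'v and lab :: "'v \<Rightarrow> taxon"
    and h :: "'e \<Rightarrow> taxon set set \<times> taxon set set \<times> taxon set set" +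
  fixes \<sigma> :: "taxon \<Rightarrow> taxon" and e0 :: 'e
  assumes bij: "bij \<sigma>" and e0: "e0 \<in> Es" and entering_fixed: "relabel \<sigma> (entering e0) = entering e0"
    and all_taxa: "\<And>W. W \<in> \<Union>(entering e0)"
begin

abbreviation h' where "h' \<equiv> swap_above \<sigma> e0 h"

text \<open>Since every taxon passes through e0, an edge beside the path above e0 carries nothing.\<close>
lemma leaving_empty_beside:
  assumes e: "e \<in> Es" "(src e, src e0) \<in> edge_rel\<^sup>*" "e \<notin> above e0" "e \<noteq> e0"
  shows "leaving e = {}"
proof (rule ccontr)
  assume "leaving e \<noteq> {}"
  then obtain b where b: "b \<in> leaving e" by blast
  then obtain W where "W \<in> b" using lineage_set_leaving[OF e(1)] unfolding lineage_set_def by blast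
  then have W: "W \<in> \<Union>(entering e)" using Union_leaving[OF e(1)] b by blast
  consider "(tgt e, src e0) \<in> (trail W)\<^sup>*" | "(tgt e0, src e) \<in> (trail W)\<^sup>*"
    using carriers_comparable[OF e(1) e0 W all_taxa] e(4) by blast
  then show False
  proof cases
    case 1
    then show False using e(1,3) rtrancl_trail_edge_rel unfolding above_def by blast
  next
    case 2
    then have "(tgt e0, src e0) \<in> edge_rel\<^sup>*" using e(2) rtrancl_trail_edge_rel by (meson rtrancl_trans)
    then show False using edge_not_reaching_src[OF e0] by simp
  qed
qed

lemma leaving_swap_above:
  assumes e: "e \<in> Es" "(src e, src e0) \<in> edge_rel\<^sup>*"
  shows "fst (snd (h' e)) = relabel \<sigma> (leaving e)"
proof -
  consider "e \<in> above e0" | "e \<notin> above e0" "e = e0" | "e \<notin> above e0" "e \<noteq> e0" by blast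
  then show ?thesis
  proof cases
    case 3
    then have "leaving e = {}" by (rule leaving_empty_beside[OF e])
    then show ?thesis using 3 unfolding swap_above_def by (simp add: relabel_empty)
  qed (simp_all add: swap_above_def relabel_triple_def)
qed

lemma outdeg_above_src:
  assumes "(v, src e0) \<in> edge_rel\<^sup>*"
  shows "outdeg Es src v \<noteq> 0"
proof (cases "v = src e0")
  case True
  then show ?thesis using outdeg_src_nonzero[OF e0] by simp
next
  case False
  then have "(v, src e0) \<in> edge_rel\<^sup>+" using assms by (simp add: rtrancl_eq_or_trancl)
  then obtain z where "(v, z) \<in> edge_rel" by (meson tranclD)
  then obtain c where "c \<in> Es" "src c = v" unfolding edge_rel_def by blast
  then show ?thesis using outdeg_src_nonzero by blast
qed

lemma lins_swap_above:
  assumes "(v, src e0) \<in> edge_rel\<^sup>*"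
  shows "bottom_lineages Es src lab h' v = relabel \<sigma> (lins v)"
proof -
  have "{fst (snd (h' c)) | c. c \<in> Es \<and> src c = v} = relabel \<sigma> ` {leaving c | c. c \<in> Es \<and> src c = v}"
    by (rule setcompr_eq_image_comp) (use leaving_swap_above assms in auto)
  then show ?thesis unfolding bottom_lineages_def using outdeg_above_src[OF assms] by (simp add: relabel_Union)
qed

lemma lins_swap_not_above:
  assumes "(v, src e0) \<notin> edge_rel\<^sup>*"
  shows "bottom_lineages Es src lab h' v = lins v"
proof (rule bottom_lineages_cong)
  fix c assume c: "c \<in> Es" "src c = v"
  have "c \<notin> above e0"
  proof
    assume "c \<in> above e0"
    then have "(tgt c, src e0) \<in> edge_rel\<^sup>*" unfolding above_def by simp
    then have "(v, src e0) \<in> edge_rel\<^sup>*" using edge_relI[OF c(1)] c(2) by (metis converse_rtrancl_into_rtrancl)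
    then show False using assms by simp
  qed
  moreover have "c \<noteq> e0" using c(2) assms by auto
  ultimately show "fst (snd (h' c)) = leaving c" unfolding swap_above_def by simp
qed

lemma consistent_swap_above: "consistent_history V Es src tgt \<rho> lab h'"
  unfolding consistent_history_def
proof
  fix v assume v: "v \<in> V - {\<rho>}"
  note cv = consistent_at[OF v]
  show "bottom_lineages Es src lab h' v = \<Union>{fst (h' e) | e. e \<in> Es \<and> tgt e = v} \<and>
        (\<forall>e1\<in>Es. \<forall>e2\<in>Es. tgt e1 = v \<and> tgt e2 = v \<and> e1 \<noteq> e2 \<longrightarrow> fst (h' e1) \<inter> fst (h' e2) = {})"
  proof (cases "(v, src e0) \<in> edge_rel\<^sup>*")
    case True
    have entering: "fst (h' e) = relabel \<sigma> (entering e)" if "e \<in> Es" "tgt e = v" for e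
      using True that unfolding entering_swap_above above_def by simp
    have "{fst (h' e) | e. e \<in> Es \<and> tgt e = v} = relabel \<sigma> ` {entering e | e. e \<in> Es \<and> tgt e = v}"
      by (rule setcompr_eq_image_comp) (use entering in auto)
    then have U: "\<Union>{fst (h' e) | e. e \<in> Es \<and> tgt e = v} = relabel \<sigma> (lins v)"
      using cv by (simp add: relabel_Union)
    have D: "\<forall>e1\<in>Es. \<forall>e2\<in>Es. tgt e1 = v \<and> tgt e2 = v \<and> e1 \<noteq> e2 \<longrightarrow> fst (h' e1) \<inter> fst (h' e2) = {}"
    proof (intro ballI impI)
      fix e1 e2 assume a: "e1 \<in> Es" "e2 \<in> Es" "tgt e1 = v \<and> tgt e2 = v \<and> e1 \<noteq> e2"
      have "entering e1 \<inter> entering e2 = {}" using cv a by blast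
      then have "relabel \<sigma> (entering e1) \<inter> relabel \<sigma> (entering e2) = {}"
        by (simp add: relabel_Int[OF bij, symmetric] relabel_empty)
      then show "fst (h' e1) \<inter> fst (h' e2) = {}" using entering a by simp
    qed
    show ?thesis using lins_swap_above[OF True] U D by simp
  next
    case False
    have entering: "fst (h' e) = entering e" if "e \<in> Es" "tgt e = v" for e
      using False that unfolding entering_swap_above above_def by simp
    have "{fst (h' e) | e. e \<in> Es \<and> tgt e = v} = {entering e | e. e \<in> Es \<and> tgt e = v}"
    proof (rule Collect_cong)
      fix x
      show "(\<exists>e. x = fst (h' e) \<and> e \<in> Es \<and> tgt e = v) \<longleftrightarrow> (\<exists>e. x = entering e \<and> e \<in> Es \<and> tgt e = v)"
        using entering by metis
    qed
    moreover have "\<forall>e1\<in>Es. \<forall>e2\<in>Es. tgt e1 = v \<and> tgt e2 = v \<and> e1 \<noteq> e2 \<longrightarrow> fst (h' e1) \<inter> fst (h' e2) = {}"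
      using cv entering by simp
    ultimately show ?thesis using lins_swap_not_above[OF False] cv by simp
  qed
qed

lemma history_weight_swap_above:
  "history_weight V Es src tgt \<rho> len \<gamma> h' (relabel \<sigma> Qr) (relabel \<sigma> Hr) = history_weight V Es src tgt \<rho> len \<gamma> h Qr Hr"
proof -
  have coal: "coalw (len e) (fst (h' e)) (fst (snd (h' e))) (snd (snd (h' e))) =
      coalw (len e) (entering e) (leaving e) (created e)" if "e \<in> Es" for e
  proof -
    consider "e \<in> above e0" | "e = e0" | "e \<notin> above e0" "e \<noteq> e0" by blast
    then show ?thesis
    proof cases
      case 1
      then show ?thesis unfolding swap_above_def relabel_triple_def using coalw_relabel[OF bij] by simp
    next
      case 2
      then have "e \<notin> above e0" using not_above_self[OF e0] by simp
      then show ?thesis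
        unfolding swap_above_def using 2 coalw_relabel[OF bij, of _ "entering e0"] entering_fixed by simp
    qed (simp add: swap_above_def)
  qed
  have card: "card (fst (h' e)) = card (entering e)" for e
    unfolding entering_swap_above using card_relabel[OF bij] by simp
  have root: "\<Union>{fst (snd (h' e)) | e. e \<in> Es \<and> src e = \<rho>} = relabel \<sigma> (lins \<rho>)"
    unfolding root_bottom_lineages[symmetric] by (rule lins_swap_above[OF root_reaches[OF src_in_V[OF e0]]])
  show ?thesis
    unfolding history_weight_def root root_bottom_lineages[symmetric] rootw_relabel[OF bij] card
    using coal by (simp cong: prod.cong)
qed

end

section \<open>Comparing a non-parental cherry with a parental one\<close>

context network
begin

definition history_space ::
  "(('e \<Rightarrow> taxon set set \<times> taxon set set \<times> taxon set set) \<times> taxon set set \<times> taxon set set) set" where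
  "history_space = (Es \<rightarrow>\<^sub>E UNIV) \<times> UNIV"

definition contribution :: "('e \<Rightarrow> real) \<Rightarrow> ('e \<Rightarrow> real) \<Rightarrow> taxon set \<Rightarrow>
    ('e \<Rightarrow> taxon set set \<times> taxon set set \<times> taxon set set) \<times> taxon set set \<times> taxon set set \<Rightarrow> real" where
  "contribution len \<gamma> g = (\<lambda>(h, Qr, Hr).
      if consistent_history V Es src tgt \<rho> lab h \<and> g \<in> Hr \<union> \<Union>((\<lambda>e. snd (snd (h e))) ` Es)
      then history_weight V Es src tgt \<rho> len \<gamma> h Qr Hr else 0)"

lemma gene_tree_prob_eq_sum:
  "gene_tree_prob V Es src tgt \<rho> lab len \<gamma> g = (\<Sum>x\<in>history_space. contribution len \<gamma> g x)"
  unfolding gene_tree_prob_def contribution_def history_space_def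
  by (simp add: sum.cartesian_product case_prod_beta')

lemma finite_history_space: "finite history_space"
  unfolding history_space_def using finite_Es by (simp add: finite_PiE)

lemma history_weight_nonneg:
  assumes "valid_params V Es tgt len \<gamma>"
  shows "history_weight V Es src tgt \<rho> len \<gamma> h Qr Hr \<ge> 0"
proof -
  have "\<gamma> e \<ge> 0" if "v \<in> reticulations V Es tgt" "e \<in> {e \<in> Es. tgt e = v}" for v e
    using assms that unfolding valid_params_def by auto
  then show ?thesis unfolding history_weight_def
    by (intro mult_nonneg_nonneg prod_nonneg coalw_nonneg rootw_nonneg ballI zero_le_power)
qed

lemma contribution_nonneg: "valid_params V Es tgt len \<gamma> \<Longrightarrow> contribution len \<gamma> g x \<ge> 0"
  unfolding contribution_def using history_weight_nonneg by (auto split: prod.splits)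

lemma history_of_nonzero_weight:
  assumes "consistent_history V Es src tgt \<rho> lab h" "history_weight V Es src tgt \<rho> len \<gamma> h Qr Hr \<noteq> 0"
  shows "history V Es src tgt \<rho> lab h" "merges (bottom_lineages Es src lab h \<rho>) Qr Hr"
proof -
  have nz: "(\<Prod>e\<in>Es. coalw (len e) (fst (h e)) (fst (snd (h e))) (snd (snd (h e)))) \<noteq> 0"
    "rootw (\<Union>{fst (snd (h e)) | e. e \<in> Es \<and> src e = \<rho>}) Qr Hr \<noteq> 0"
    using assms(2) unfolding history_weight_def by auto
  have "merges (fst (h e)) (fst (snd (h e))) (snd (snd (h e)))" if e: "e \<in> Es" for e
  proof -
    have "coalw (len e) (fst (h e)) (fst (snd (h e))) (snd (snd (h e))) \<noteq> 0"
      using nz(1) e finite_Es by (auto simp: prod_zero_iff)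
    then obtain k where "pd (card (fst (h e))) k (len e) * mchain k (fst (h e)) (fst (snd (h e))) (snd (snd (h e))) \<noteq> 0"
      unfolding coalw_def by (auto elim: sum.not_neutral_contains_not_neutral)
    then have "mchain k (fst (h e)) (fst (snd (h e))) (snd (snd (h e))) \<noteq> 0" by simp
    then show ?thesis by (rule mchain_nonzero_merges)
  qed
  then show "history V Es src tgt \<rho> lab h"
    using assms(1) net by (simp add: history_def history_axioms_def network_def)
  show "merges (bottom_lineages Es src lab h \<rho>) Qr Hr"
    using nz(2) unfolding root_bottom_lineages rootw_def by (rule mchain_nonzero_merges)
qed

end

locale cherry_comparison = network V Es src tgt \<rho> lab
  for V :: "'v set" and Es :: "'e set" and src tgt :: "'e \<Rightarrow> 'v" and \<rho> :: 'v and lab :: "'v \<Rightarrow> taxon" +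
  fixes len \<gamma> :: "'e \<Rightarrow> real" and X Y Z :: taxon
  assumes valid: "valid_params V Es tgt len \<gamma>"
    and distinct: "X \<noteq> Y" "Z \<noteq> X" "Z \<noteq> Y" and taxa: "\<And>W. W = X \<or> W = Y \<or> W = Z"
    and nonparental: "{X, Y} \<notin> parental_trees V Es src tgt \<rho> lab"
begin

abbreviation \<sigma> :: "taxon \<Rightarrow> taxon" where "\<sigma> \<equiv> Transposition.transpose Y Z"

lemma relabel_singletons: "relabel \<sigma> {{X}, {Y}, {Z}} = {{X}, {Y}, {Z}}"
  unfolding relabel_def using distinct by auto

lemma image_cherry: "\<sigma> ` {X, Y} = {X, Z}"
  using distinct by auto

lemma cherry_mem_relabel_iff: "{X, Z} \<in> relabel \<sigma> H \<longleftrightarrow> {X, Y} \<in> H"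
  using image_mem_relabel_iff[OF bij_transpose, of Y Z "{X, Y}"] image_cherry by simp

definition support where
  "support = {x \<in> history_space. contribution len \<gamma> {X, Y} x \<noteq> 0}"

lemma supportD:
  assumes "(h, Qr, Hr) \<in> support"
  shows "consistent_history V Es src tgt \<rho> lab h" "{X, Y} \<in> Hr \<union> \<Union>((\<lambda>e. snd (snd (h e))) ` Es)"
    "h \<in> Es \<rightarrow>\<^sub>E UNIV" "contribution len \<gamma> {X, Y} (h, Qr, Hr) = history_weight V Es src tgt \<rho> len \<gamma> h Qr Hr"
    "history V Es src tgt \<rho> lab h" "merges (bottom_lineages Es src lab h \<rho>) Qr Hr"
proof -
  have *: "contribution len \<gamma> {X, Y} (h, Qr, Hr) \<noteq> 0" "h \<in> Es \<rightarrow>\<^sub>E UNIV"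
    using assms unfolding support_def history_space_def by auto
  then show c: "consistent_history V Es src tgt \<rho> lab h" and "{X, Y} \<in> Hr \<union> \<Union>((\<lambda>e. snd (snd (h e))) ` Es)"
    and "h \<in> Es \<rightarrow>\<^sub>E UNIV"
    and "contribution len \<gamma> {X, Y} (h, Qr, Hr) = history_weight V Es src tgt \<rho> len \<gamma> h Qr Hr"
    unfolding contribution_def by (auto split: if_splits)
  have "history_weight V Es src tgt \<rho> len \<gamma> h Qr Hr \<noteq> 0" using * unfolding contribution_def by (auto split: if_splits)
  then show "history V Es src tgt \<rho> lab h" "merges (bottom_lineages Es src lab h \<rho>) Qr Hr"
    using history_of_nonzero_weight[OF c] by blast+
qed

definition creation_edge :: "('e \<Rightarrow> taxon set set \<times> taxon set set \<times> taxon set set) \<Rightarrow> 'e" where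
  "creation_edge h = (SOME e. e \<in> Es \<and> {X, Y} \<in> snd (snd (h e)))"

lemma creation_edge:
  assumes "(h, Qr, Hr) \<in> support" "{X, Y} \<notin> Hr"
  shows "creation_edge h \<in> Es" "{X, Y} \<in> snd (snd (h (creation_edge h)))"
    "fst (h (creation_edge h)) = {{X}, {Y}, {Z}}" "swap_setting V Es src tgt \<rho> lab h \<sigma> (creation_edge h)"
proof -
  interpret history V Es src tgt \<rho> lab h using supportD(5)[OF assms(1)] .
  have "\<exists>e. e \<in> Es \<and> {X, Y} \<in> created e" using supportD(2)[OF assms(1)] assms(2) by blast
  then have "creation_edge h \<in> Es \<and> {X, Y} \<in> created (creation_edge h)"
    unfolding creation_edge_def by (rule someI_ex)
  then show e: "creation_edge h \<in> Es" and g: "{X, Y} \<in> created (creation_edge h)" by simp_all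
  show P: "entering (creation_edge h) = {{X}, {Y}, {Z}}"
    by (rule nonparental_cherry_edge[OF e g nonparental distinct taxa])
  show "swap_setting V Es src tgt \<rho> lab h \<sigma> (creation_edge h)"
    by unfold_locales (use e P relabel_singletons taxa in auto)
qed

text \<open>The injection from histories creating {X, Y} into histories creating {X, Z}.\<close>
definition cherry_swap where
  "cherry_swap = (\<lambda>(h, Qr, Hr). if {X, Y} \<in> Hr then (h, relabel \<sigma> Qr, relabel \<sigma> Hr)
      else (swap_above \<sigma> (creation_edge h) h, relabel \<sigma> Qr, relabel \<sigma> Hr))"

lemma cherry_swap_root:
  assumes "(h, Qr, Hr) \<in> support" "{X, Y} \<in> Hr"
  shows "cherry_swap (h, Qr, Hr) \<in> history_space \<and>
    contribution len \<gamma> {X, Z} (cherry_swap (h, Qr, Hr)) = contribution len \<gamma> {X, Y} (h, Qr, Hr)"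
proof -
  interpret history V Es src tgt \<rho> lab h using supportD(5)[OF assms(1)] .
  have "lins \<rho> = {{X}, {Y}, {Z}}"
    using cherry_at_root[OF supportD(6)[OF assms(1)] assms(2) distinct taxa] .
  then have "history_weight V Es src tgt \<rho> len \<gamma> h (relabel \<sigma> Qr) (relabel \<sigma> Hr) = history_weight V Es src tgt \<rho> len \<gamma> h Qr Hr"
    unfolding history_weight_def root_bottom_lineages[symmetric]
    using rootw_relabel[OF bij_transpose, of Y Z "{{X}, {Y}, {Z}}"] relabel_singletons by simp
  then show ?thesis
    using supportD[OF assms(1)] assms(2) cherry_mem_relabel_iff
    unfolding cherry_swap_def contribution_def history_space_def by auto
qed

lemma cherry_swap_edge:
  assumes "(h, Qr, Hr) \<in> support" "{X, Y} \<notin> Hr"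
  shows "cherry_swap (h, Qr, Hr) \<in> history_space \<and>
    contribution len \<gamma> {X, Z} (cherry_swap (h, Qr, Hr)) = contribution len \<gamma> {X, Y} (h, Qr, Hr)"
proof -
  note e = creation_edge[OF assms]
  interpret swap_setting V Es src tgt \<rho> lab h \<sigma> "creation_edge h" by (rule e(4))
  have "{X, Z} \<in> snd (snd (h' (creation_edge h)))"
    using e(2) created_swap_above[OF e(1)] cherry_mem_relabel_iff by simp
  then have "contribution len \<gamma> {X, Z} (h', relabel \<sigma> Qr, relabel \<sigma> Hr) = history_weight V Es src tgt \<rho> len \<gamma> h Qr Hr"
    unfolding contribution_def using consistent_swap_above history_weight_swap_above e(1) by auto
  moreover have "h' \<in> Es \<rightarrow>\<^sub>E UNIV" using swap_above_PiE supportD(3)[OF assms(1)] e(1) by blast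
  ultimately show ?thesis
    using supportD(4)[OF assms(1)] assms(2) unfolding cherry_swap_def history_space_def by simp
qed

lemma cherry_swap_preserves:
  assumes "x \<in> support"
  shows "cherry_swap x \<in> history_space \<and> contribution len \<gamma> {X, Z} (cherry_swap x) = contribution len \<gamma> {X, Y} x"
proof -
  obtain h Qr Hr where x: "x = (h, Qr, Hr)" by (metis prod.exhaust)
  show ?thesis
  proof (cases "{X, Y} \<in> Hr")
    case True
    then show ?thesis using cherry_swap_root[OF assms[unfolded x]] x by simp
  next
    case False
    then show ?thesis using cherry_swap_edge[OF assms[unfolded x]] x by simp
  qed
qed

text \<open>Two histories swapped above different edges would both create {X, Z} on edges entered
  by the singleton lineage X, which contradicts cherry_created_once.\<close>
lemma swap_above_distinct_edges:
  assumes s1: "(h1, Q1, H1) \<in> support" "{X, Y} \<notin> H1" and s2: "(h2, Q2, H2) \<in> support" "{X, Y} \<notin> H2"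
    and eq: "swap_above \<sigma> (creation_edge h1) h1 = swap_above \<sigma> (creation_edge h2) h2"
  shows "creation_edge h1 = creation_edge h2"
proof -
  note e1 = creation_edge[OF s1] and e2 = creation_edge[OF s2]
  define y where "y = swap_above \<sigma> (creation_edge h1) h1"
  have swapped: "fst (y e) = {{X}, {Y}, {Z}}" "{X, Z} \<in> snd (snd (y e))"
    if "e = creation_edge h" "(h, Q, H) \<in> support" "{X, Y} \<notin> H" "y = swap_above \<sigma> e h" for e h Q H
  proof -
    note e = creation_edge[OF that(2,3)]
    show "fst (y e) = {{X}, {Y}, {Z}}"
      using e(3) not_above_self[OF e(1)] unfolding that(1,4) entering_swap_above by simp
    show "{X, Z} \<in> snd (snd (y e))"
      using e(2) created_swap_above[OF e(1)] cherry_mem_relabel_iff unfolding that(1,4) by simp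
  qed
  note sw1 = swapped[OF refl s1 y_def] and sw2 = swapped[OF refl s2 y_def[unfolded eq]]
  have "consistent_history V Es src tgt \<rho> lab y"
    and "history_weight V Es src tgt \<rho> len \<gamma> y (relabel \<sigma> Q1) (relabel \<sigma> H1) \<noteq> 0"
  proof -
    interpret swap_setting V Es src tgt \<rho> lab h1 \<sigma> "creation_edge h1" by (rule e1(4))
    show "consistent_history V Es src tgt \<rho> lab y" unfolding y_def by (rule consistent_swap_above)
    show "history_weight V Es src tgt \<rho> len \<gamma> y (relabel \<sigma> Q1) (relabel \<sigma> H1) \<noteq> 0"
      unfolding y_def history_weight_swap_above using supportD[OF s1(1)] s1(1) unfolding support_def by simp
  qed
  then interpret hy: history V Es src tgt \<rho> lab y by (rule history_of_nonzero_weight)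
  show ?thesis
    using hy.cherry_created_once[OF e1(1) e2(1) _ _ sw1(2) sw2(2) distinct(2)] sw1(1) sw2(1) by simp
qed

lemma inj_on_cherry_swap: "inj_on cherry_swap support"
proof (rule inj_onI)
  fix x1 x2 assume x: "x1 \<in> support" "x2 \<in> support" "cherry_swap x1 = cherry_swap x2"
  obtain h1 Q1 H1 h2 Q2 H2 where x12: "x1 = (h1, Q1, H1)" "x2 = (h2, Q2, H2)" by (metis prod.exhaust)
  have "relabel \<sigma> Q1 = relabel \<sigma> Q2" "relabel \<sigma> H1 = relabel \<sigma> H2"
    using x(3) unfolding x12 cherry_swap_def by (auto split: if_splits)
  then have QH: "Q1 = Q2" "H1 = H2" using relabel_eq_iff[OF bij_transpose] by auto
  show "x1 = x2"
  proof (cases "{X, Y} \<in> H1")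
    case True
    then show ?thesis using x(3) QH unfolding x12 cherry_swap_def by simp
  next
    case False
    have eq: "swap_above \<sigma> (creation_edge h1) h1 = swap_above \<sigma> (creation_edge h2) h2"
      using x(3) False QH unfolding x12 cherry_swap_def by simp
    moreover have "creation_edge h1 = creation_edge h2"
      using swap_above_distinct_edges[OF _ False _ _ eq] x(1,2) False QH unfolding x12 by simp
    ultimately have "h1 = h2" using swap_above_inj[OF bij_transpose] by metis
    then show ?thesis using x12 QH by simp
  qed
qed

lemma gene_tree_prob_le:
  "gene_tree_prob V Es src tgt \<rho> lab len \<gamma> {X, Y} \<le> gene_tree_prob V Es src tgt \<rho> lab len \<gamma> {X, Z}"
proof -
  have "gene_tree_prob V Es src tgt \<rho> lab len \<gamma> {X, Y} = (\<Sum>x\<in>support. contribution len \<gamma> {X, Y} x)"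
    unfolding gene_tree_prob_eq_sum support_def
    by (rule sum.mono_neutral_right) (use finite_history_space in auto)
  also have "\<dots> = (\<Sum>x\<in>support. contribution len \<gamma> {X, Z} (cherry_swap x))"
    using cherry_swap_preserves by simp
  also have "\<dots> = (\<Sum>y\<in>cherry_swap ` support. contribution len \<gamma> {X, Z} y)"
    by (simp add: sum.reindex[OF inj_on_cherry_swap])
  also have "\<dots> \<le> (\<Sum>y\<in>history_space. contribution len \<gamma> {X, Z} y)"
    by (rule sum_mono2[OF finite_history_space]) (use cherry_swap_preserves contribution_nonneg[OF valid] in auto)
  finally show ?thesis unfolding gene_tree_prob_eq_sum .
qed

end

lemma distinct_cherries_share_taxon:
  fixes g t :: "taxon set"
  assumes "card g = 2" "card t = 2" "g \<noteq> t"
  shows "\<exists>X Y Z. g = {X, Y} \<and> t = {X, Z} \<and> X \<noteq> Y \<and> Z \<noteq> X \<and> Z \<noteq> Y \<and> (\<forall>W. W = X \<or> W = Y \<or> W = Z)"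
proof -
  have pairs: "T = {A, B} \<or> T = {A, C} \<or> T = {B, C}" if "card T = 2" for T :: "taxon set"
  proof -
    obtain x y where "T = {x, y}" "x \<noteq> y" using \<open>card T = 2\<close> by (meson card_2_iff)
    then show ?thesis by (cases x; cases y) (auto simp: insert_commute)
  qed
  have all: "\<forall>W. W = A \<or> W = B \<or> W = C" "\<forall>W. W = A \<or> W = C \<or> W = B" "\<forall>W. W = B \<or> W = A \<or> W = C"
    "\<forall>W. W = B \<or> W = C \<or> W = A" "\<forall>W. W = C \<or> W = A \<or> W = B" "\<forall>W. W = C \<or> W = B \<or> W = A"
    using taxon.exhaust by blast+
  from pairs[OF assms(1)] pairs[OF assms(2)] assms(3) show ?thesis
  proof (elim disjE)
  qed (use all in \<open>simp_all add: insert_commute; blast\<close>)+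
qed

theorem lemma1:
  fixes V :: "'v set" and Es :: "'e set" and src tgt :: "'e \<Rightarrow> 'v" and \<rho> :: 'v
    and lab :: "'v \<Rightarrow> taxon"
  assumes "phylo_net3 V Es src tgt \<rho> lab"
  shows "\<forall>len \<gamma>. valid_params V Es tgt len \<gamma> \<longrightarrow>
           (\<nexists>g. g \<in> topologies3 \<and> anomalous V Es src tgt \<rho> lab len \<gamma> g)"
proof (intro allI impI notI)
  fix len \<gamma>
  assume valid: "valid_params V Es tgt len \<gamma>"
    and "\<exists>g. g \<in> topologies3 \<and> anomalous V Es src tgt \<rho> lab len \<gamma> g"
  then obtain g where g: "card g = 2" "anomalous V Es src tgt \<rho> lab len \<gamma> g"
    unfolding topologies3_def by blast
  interpret network V Es src tgt \<rho> lab by unfold_locales (rule assms)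
  obtain t where t: "t \<in> parental_trees V Es src tgt \<rho> lab" using parental_trees_nonempty by blast
  then have less: "gene_tree_prob V Es src tgt \<rho> lab len \<gamma> t < gene_tree_prob V Es src tgt \<rho> lab len \<gamma> g"
    using g(2) unfolding anomalous_def by blast
  have nonparental: "g \<notin> parental_trees V Es src tgt \<rho> lab"
    using g(2) unfolding anomalous_def by auto
  have "card t = 2" using t unfolding parental_trees_def by simp
  moreover have "g \<noteq> t" using t nonparental by blast
  ultimately obtain X Y Z where xyz: "g = {X, Y}" "t = {X, Z}" "X \<noteq> Y" "Z \<noteq> X" "Z \<noteq> Y"
    "\<forall>W. W = X \<or> W = Y \<or> W = Z"
    using distinct_cherries_share_taxon[OF g(1)] by blast
  interpret cherry_comparison V Es src tgt \<rho> lab len \<gamma> X Y Z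
    by unfold_locales (use valid xyz nonparental in auto)
  show False using gene_tree_prob_le less xyz(1,2) by simp
qed

end
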